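(* Let $A$ be a connected monounary algebra. Then there are a set $I$ and algebras $B_i\in\mathbf R(A)\cap\mathcal S$, $i\in I$, such that $\mathbf V(A)=\mathbf V(\{B_i:i\in I\})$.
   Context: A monounary algebra is a pair $(A,f)$ with $A$ a nonempty set and $f:A\to A$; a partial monounary algebra allows $f$ to be a partial map. Direct products are coordinatewise. A (partial) monounary algebra is connected if for all $x,y$ there are $m,n\ge0$ with $f^m(x),f^n(y)$ defined and equal. A retract of $A$ is a nonempty subalgebra $M$ such that there is an endomorphism $h:A\to M$ with $h|_M=\mathrm{id}$; $\mathbf R(A)$ is the class of algebras isomorphic to a retract of $A$. A retract variety is a class closed under isomorphisms, retracts and direct products; $\mathbf V(\mathcal K)$ is the smallest retract variety containing $\mathcal K$. For $x\in A$: $f^{-1}(x)=\{y\in\mathrm{dom}f:f(y)=x\}$, $f^{-n}(x)=\bigcup_{z\in f^{-(n-1)}(x)}f^{-1}(z)$, $P(x)=\{x\}\cup\bigcup_{n\ge1}f^{-n}(x)$, regarded as a partial monounary algebra with $f$ restricted to those $y\in P(x)$ with $f(y)$ defined and in $P(x)$. $A^{(\infty)}$ is the set of $x\in A$ admitting $x_0=x,x_1,\dots$ with $f(x_n)=x_{n-1}$ for $n\ge1$; $A'=\{x\in A\setminus A^{(\infty)}: f(x)\in A^{(\infty)}\}$. Condition ($\bigstar$) on $(A,f)$: whenever $x_1,x_2,x_3\in A$ with $f(x_1)=f(x_2)=f(x_3)$ and $P(x_1),P(x_2),P(x_3)$ pairwise isomorphic, then $|\{x_1,x_2,x_3\}|\le2$.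 $\mathcal U^\bigstar_c$ is the class of connected monounary algebras satisfying ($\bigstar$). Special algebras: $Z=(\mathbb Z,k\mapsto k+1)$; for $n\in\mathbb N$, $\underline n=(\mathbb Z_n,k\mapsto k+1\bmod n)$; $E$ has universe $\mathbb Z\cup\{(k,1):k\in\mathbb N\}$ with $f(k)=k+1$ on $\mathbb Z$, $f((k,1))=(k-1,1)$ for $k>1$ and $f((1,1))=0$; $\widehat n$ has universe $\mathbb Z_n\cup\{(k,1):k\in\mathbb N\}$ with $f(k)=k+1\bmod n$ on $\mathbb Z_n$, $f((k,1))=(k-1,1)$ for $k>1$, $f((1,1))=0$. $\mathcal S^{(0)}$ is the class of algebras isomorphic to $Z$, $E$, or to $\underline n$ or $\widehat n$ for some $n\in\mathbb N$; $\mathcal S^{(1)}$ is the class of $A\in\mathcal U^\bigstar_c$ for which there is $a\in A$ with $A'=\{a\}$ and the subalgebra $A\setminus P(a)$ in $\mathcal S^{(0)}$; $\mathcal S^{(2)}$ is the class of $A\in\mathcal U^\bigstar_c$ with $A^{(\infty)}=\emptyset$; $\mathcal S=\mathcal S^{(0)}\cup\mathcal S^{(1)}\cup\mathcal S^{(2)}$. *)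

theory Defs
  imports Main "HOL-Library.FuncSet"
begin

text \<open>A (total) monounary algebra is represented by a nonempty carrier set A
  together with a map f that is closed on A (values of f outside A are irrelevant).\<close>

definition mono_alg :: "'a set \<Rightarrow> ('a \<Rightarrow> 'a) \<Rightarrow> bool" where
  "mono_alg A f \<longleftrightarrow> A \<noteq> {} \<and> f ` A \<subseteq> A"

definition alg_iso :: "'a set \<Rightarrow> ('a \<Rightarrow> 'a) \<Rightarrow> 'b set \<Rightarrow> ('b \<Rightarrow> 'b) \<Rightarrow> bool" where
  "alg_iso A f B g \<longleftrightarrow> (\<exists>h. bij_betw h A B \<and> (\<forall>x\<in>A. h (f x) = g (h x)))"

definition connected_alg :: "'a set \<Rightarrow> ('a \<Rightarrow> 'a) \<Rightarrow> bool" where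
  "connected_alg A f \<longleftrightarrow> (\<forall>x\<in>A. \<forall>y\<in>A. \<exists>m n. (f ^^ m) x = (f ^^ n) y)"

definition retract :: "'a set \<Rightarrow> ('a \<Rightarrow> 'a) \<Rightarrow> 'a set \<Rightarrow> bool" where
  "retract A f M \<longleftrightarrow> M \<noteq> {} \<and> M \<subseteq> A \<and> f ` M \<subseteq> M \<and>
     (\<exists>h. h ` A \<subseteq> M \<and> (\<forall>x\<in>A. h (f x) = f (h x)) \<and> (\<forall>x\<in>M. h x = x))"

definition Pset :: "'a set \<Rightarrow> ('a \<Rightarrow> 'a) \<Rightarrow> 'a \<Rightarrow> 'a set" where
  "Pset A f x = {y \<in> A. \<exists>n. (f ^^ n) y = x}"

text \<open>Domain of the partial operation on a subset S: f restricted to those y with f y \<in> S.\<close>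
definition pdom :: "'a set \<Rightarrow> ('a \<Rightarrow> 'a) \<Rightarrow> 'a set" where
  "pdom S f = {y \<in> S. f y \<in> S}"

definition partial_iso :: "'a set \<Rightarrow> 'a set \<Rightarrow> ('a \<Rightarrow> 'a) \<Rightarrow> bool" where
  "partial_iso S T f \<longleftrightarrow> (\<exists>h. bij_betw h S T \<and>
      (\<forall>y\<in>S. y \<in> pdom S f \<longleftrightarrow> h y \<in> pdom T f) \<and>
      (\<forall>y\<in>pdom S f. h (f y) = f (h y)))"

definition star_cond :: "'a set \<Rightarrow> ('a \<Rightarrow> 'a) \<Rightarrow> bool" where
  "star_cond A f \<longleftrightarrow> (\<forall>x1\<in>A. \<forall>x2\<in>A. \<forall>x3\<in>A.
      f x1 = f x2 \<and> f x2 = f x3 \<and>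
      partial_iso (Pset A f x1) (Pset A f x2) f \<and>
      partial_iso (Pset A f x1) (Pset A f x3) f \<and>
      partial_iso (Pset A f x2) (Pset A f x3) f
      \<longrightarrow> card {x1, x2, x3} \<le> 2)"

definition U_star_c :: "'a set \<Rightarrow> ('a \<Rightarrow> 'a) \<Rightarrow> bool" where
  "U_star_c A f \<longleftrightarrow> mono_alg A f \<and> connected_alg A f \<and> star_cond A f"

definition Ainf :: "'a set \<Rightarrow> ('a \<Rightarrow> 'a) \<Rightarrow> 'a set" where
  "Ainf A f = {x \<in> A. \<exists>s :: nat \<Rightarrow> 'a. s 0 = x \<and> (\<forall>n. s n \<in> A \<and> f (s (Suc n)) = s n)}"

definition Aprime :: "'a set \<Rightarrow> ('a \<Rightarrow> 'a) \<Rightarrow> 'a set" where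
  "Aprime A f = {x \<in> A - Ainf A f. f x \<in> Ainf A f}"

text \<open>The special algebras. Here \<nat> = {1,2,...}.\<close>
definition Z_car :: "int set" where "Z_car = UNIV"
definition Z_fun :: "int \<Rightarrow> int" where "Z_fun k = k + 1"

definition cyc_car :: "nat \<Rightarrow> int set" where "cyc_car n = {0..<int n}"
definition cyc_fun :: "nat \<Rightarrow> int \<Rightarrow> int" where "cyc_fun n k = (k + 1) mod int n"

text \<open>E: Inl k stands for k \<in> \<int>, Inr k for (k,1), k \<ge> 1.\<close>
definition E_car :: "(int + nat) set" where
  "E_car = range Inl \<union> Inr ` {k. k \<ge> 1}"
definition E_fun :: "int + nat \<Rightarrow> int + nat" where
  "E_fun x = (case x of Inl k \<Rightarrow> Inl (k + 1)
                      | Inr k \<Rightarrow> (if k > 1 then Inr (k - 1) else Inl 0))"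

text \<open>hat n: Inl k stands for k \<in> \<int>_n, Inr k for (k,1), k \<ge> 1.\<close>
definition hat_car :: "nat \<Rightarrow> (int + nat) set" where
  "hat_car n = Inl ` {0..<int n} \<union> Inr ` {k. k \<ge> 1}"
definition hat_fun :: "nat \<Rightarrow> int + nat \<Rightarrow> int + nat" where
  "hat_fun n x = (case x of Inl k \<Rightarrow> Inl ((k + 1) mod int n)
                      | Inr k \<Rightarrow> (if k > 1 then Inr (k - 1) else Inl 0))"

definition S0 :: "'a set \<Rightarrow> ('a \<Rightarrow> 'a) \<Rightarrow> bool" where
  "S0 A f \<longleftrightarrow> mono_alg A f \<and>
     (alg_iso A f Z_car Z_fun \<or> alg_iso A f E_car E_fun \<or>
      (\<exists>n\<ge>1. alg_iso A f (cyc_car n) (cyc_fun n)) \<or>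
      (\<exists>n\<ge>1. alg_iso A f (hat_car n) (hat_fun n)))"

definition S1 :: "'a set \<Rightarrow> ('a \<Rightarrow> 'a) \<Rightarrow> bool" where
  "S1 A f \<longleftrightarrow> U_star_c A f \<and>
     (\<exists>a\<in>A. Aprime A f = {a} \<and> S0 (A - Pset A f a) f)"

definition S2 :: "'a set \<Rightarrow> ('a \<Rightarrow> 'a) \<Rightarrow> bool" where
  "S2 A f \<longleftrightarrow> U_star_c A f \<and> Ainf A f = {}"

definition S_class :: "'a set \<Rightarrow> ('a \<Rightarrow> 'a) \<Rightarrow> bool" where
  "S_class A f \<longleftrightarrow> S0 A f \<or> S1 A f \<or> S2 A f"

definition prod_fun :: "'i set \<Rightarrow> ('a \<Rightarrow> 'a) \<Rightarrow> ('i \<Rightarrow> 'a) \<Rightarrow> ('i \<Rightarrow> 'a)" where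
  "prod_fun J f x = restrict (\<lambda>j. f (x j)) J"

text \<open>Membership of (C,g) in V(K) where K = {(M, f) : M \<in> K} is a family of
  subalgebras of one ambient algebra with operation f: (C,g) is isomorphic to a retract
  of a (nonempty) direct product of members of K (with repetitions allowed: index
  (M,k) denotes the k-th copy of M).\<close>
definition in_V :: "'a set set \<Rightarrow> ('a \<Rightarrow> 'a) \<Rightarrow> 'c set \<Rightarrow> ('c \<Rightarrow> 'c) \<Rightarrow> bool" where
  "in_V K f C g \<longleftrightarrow> (\<exists>J :: ('a set \<times> nat) set. J \<noteq> {} \<and> fst ` J \<subseteq> K \<and>
      (\<exists>R. retract (PiE J fst) (prod_fun J f) R \<and> alg_iso C g R (prod_fun J f)))"

end

theory Submission
  imports Defs
begin

lemma funpow_closed: "f ` A \<subseteq> A \<Longrightarrow> x \<in> A \<Longrightarrow> (f ^^ n) x \<in> A"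
  by (induction n) auto

lemma funpow_funpow: "(f ^^ m) ((f ^^ n) x) = (f ^^ (m + n)) x"
  by (simp add: funpow_add)

lemma funpow_cycle_of_eq:
  assumes "(f ^^ a) x = (f ^^ b) x" "a < b"
  shows "(f ^^ Suc (b - a - 1)) ((f ^^ a) x) = (f ^^ a) x"
proof -
  have "Suc (b - a - 1) + a = b" using assms(2) by simp
  then show ?thesis using assms(1) by (metis funpow_funpow)
qed

lemma Least_Suc_eq_Least_minus_1:
  assumes "Q n" "\<not> Q 0"
  shows "(LEAST m. Q (Suc m)) = (LEAST m. Q m) - 1"
  using Least_Suc[of Q n, OF assms] by simp

lemma hom_funpow:
  assumes "\<forall>x\<in>A. g (f x) = f (g x)" "f ` A \<subseteq> A" "x \<in> A"
  shows "g ((f ^^ n) x) = (f ^^ n) (g x)"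
proof (induction n)
  case (Suc n)
  have "(f ^^ n) x \<in> A" using funpow_closed assms(2,3) by metis
  then show ?case using Suc assms(1) by simp
qed simp

section \<open>Retracts and the retract variety generated by a family of subalgebras\<close>

lemma retract_trans:
  assumes "retract A f A1" "retract A1 f M"
  shows "retract A f M"
proof -
  from assms(1) obtain h1 where A1: "A1 \<subseteq> A" and
    h1: "h1 ` A \<subseteq> A1" "\<forall>x\<in>A. h1 (f x) = f (h1 x)" "\<forall>x\<in>A1. h1 x = x"
    unfolding retract_def by blast
  from assms(2) obtain h2 where M: "M \<noteq> {}" "M \<subseteq> A1" "f ` M \<subseteq> M" and
    h2: "h2 ` A1 \<subseteq> M" "\<forall>x\<in>A1. h2 (f x) = f (h2 x)" "\<forall>x\<in>M. h2 x = x"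
    unfolding retract_def by blast
  show ?thesis unfolding retract_def
  proof (intro conjI exI[of _ "h2 \<circ> h1"])
    show "(h2 \<circ> h1) ` A \<subseteq> M" using h1(1) h2(1) by auto
    show "\<forall>x\<in>A. (h2 \<circ> h1) (f x) = f ((h2 \<circ> h1) x)" using h1(1,2) h2(2) by auto
    show "\<forall>x\<in>M. (h2 \<circ> h1) x = x" using M(2) h1(3) h2(3) by auto
  qed (use A1 M in auto)
qed

text \<open>A subalgebra that is reached from every point, and on which f is onto, is a retract:
  push a point forward until it enters H, then go back the same number of steps inside H.\<close>

lemma retract_of_onto_subalgebra:
  assumes fA: "f ` A \<subseteq> A" and H: "H \<subseteq> A" "H \<noteq> {}" "f ` H \<subseteq> H"
    and \<beta>: "\<forall>y\<in>H. \<beta> y \<in> H \<and> f (\<beta> y) = y"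
    and reach: "\<forall>x\<in>A. \<exists>t. (f ^^ t) x \<in> H"
  shows "retract A f H"
proof -
  define T where "T x = (LEAST t. (f ^^ t) x \<in> H)" for x
  define h where "h x = (\<beta> ^^ T x) ((f ^^ T x) x)" for x
  have \<beta>n: "(\<beta> ^^ n) y \<in> H" if "y \<in> H" for y n
    using that \<beta> by (induction n) auto
  have TH: "(f ^^ T x) x \<in> H" if "x \<in> A" for x
    unfolding T_def using reach that by (meson LeastI)
  have hid: "h x = x" if "x \<in> H" for x
    using that unfolding h_def T_def by simp
  have hom: "h (f x) = f (h x)" if xA: "x \<in> A" for x
  proof (cases "x \<in> H")
    case True
    then show ?thesis using hid H(3) by auto
  next
    case False
    obtain n where n: "(f ^^ n) x \<in> H" using reach xA by blast
    have "T x \<noteq> 0" using TH[OF xA] False by (metis funpow_0)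
    then obtain m where m: "T x = Suc m" by (cases "T x") auto
    have comp: "(f ^^ k) (f x) = (f ^^ Suc k) x" for k by (simp add: funpow_swap1)
    have "T (f x) = T x - 1"
      unfolding T_def comp using Least_Suc_eq_Least_minus_1[of "\<lambda>k. (f ^^ k) x \<in> H" n] n False
      by simp
    then have Tf: "T (f x) = m" using m by simp
    define y where "y = (f ^^ Suc m) x"
    have yH: "y \<in> H" using TH[OF xA] m y_def by simp
    have "h (f x) = (\<beta> ^^ m) y" unfolding h_def Tf y_def comp by simp
    moreover have "f (h x) = f (\<beta> ((\<beta> ^^ m) y))" unfolding h_def m y_def by simp
    ultimately show ?thesis using \<beta> \<beta>n[OF yH] by metis
  qed
  have "h x \<in> H" if "x \<in> A" for x
    unfolding h_def using TH[OF that] \<beta>n by blast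
  then show ?thesis unfolding retract_def
    using H hid hom by (intro conjI exI[of _ h]) auto
qed

text \<open>A homomorphism on P is assembled from homomorphisms \<phi> t, indexed by the points t of a
  subalgebra R: a point s uses the index at which its forward orbit first enters R.\<close>

lemma hom_from_first_entry:
  assumes R: "F ` R \<subseteq> R" "t\<^sub>0 \<in> R"
    and \<phi>: "\<forall>t\<in>R. \<forall>s\<in>P. \<phi> t s \<in> X \<and> \<phi> t (F s) = f (\<phi> t s)"
    and diag: "\<forall>t\<in>R. \<phi> (F t) (F t) = f (\<phi> t t)"
  shows "\<exists>r. (\<forall>s\<in>P. r s \<in> X \<and> r (F s) = f (r s)) \<and> (\<forall>t\<in>R. r t = \<phi> t t)"
proof -
  define hits where "hits s \<longleftrightarrow> (\<exists>n. (F ^^ n) s \<in> R)" for s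
  define N where "N s = (LEAST n. (F ^^ n) s \<in> R)" for s
  define r where "r s = (if hits s then \<phi> ((F ^^ N s) s) s else \<phi> t\<^sub>0 s)" for s
  have NR: "(F ^^ N s) s \<in> R" if "hits s" for s
    using that unfolding N_def hits_def by (meson LeastI)
  have comp: "(F ^^ n) (F s) = (F ^^ Suc n) s" for n s by (simp add: funpow_swap1)
  have entry_F: "(F ^^ N (F s)) (F s) = (F ^^ N s) s" if hs: "hits s" and sR: "s \<notin> R" for s
  proof -
    obtain n where n: "(F ^^ n) s \<in> R" using hs unfolding hits_def by blast
    have "N (F s) = N s - 1"
      unfolding N_def comp using Least_Suc_eq_Least_minus_1[of "\<lambda>k. (F ^^ k) s \<in> R" n] n sR
      by simp
    moreover have "N s \<noteq> 0" using NR[OF hs] sR by (metis funpow_0)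
    ultimately show ?thesis using comp by (metis Suc_pred' neq0_conv)
  qed
  have hits_F: "hits (F s) \<longleftrightarrow> hits s" for s
    unfolding hits_def using R(1) comp by (metis funpow_0 image_subset_iff not0_implies_Suc)
  have rX: "r s \<in> X" if "s \<in> P" for s
    using that \<phi> NR R(2) unfolding r_def by auto
  have rhom: "r (F s) = f (r s)" if s: "s \<in> P" for s
  proof (cases "hits s")
    case True
    show ?thesis
    proof (cases "s \<in> R")
      case sR: True
      then have "N s = 0" "N (F s) = 0" using R(1) by (auto simp: N_def)
      then show ?thesis using diag sR True hits_F unfolding r_def by simp
    next
      case False
      then show ?thesis using \<phi> NR[OF True] s True hits_F entry_F[OF True False] unfolding r_def by simp
    qed
  next
    case False
    then show ?thesis using \<phi> R(2) s hits_F unfolding r_def by simp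
  qed
  have "r t = \<phi> t t" if "t \<in> R" for t
  proof -
    have "hits t" "N t = 0" using that unfolding hits_def N_def by (auto intro!: exI[of _ 0])
    then show ?thesis unfolding r_def by simp
  qed
  then show ?thesis using rX rhom by blast
qed

lemma retract_image_of_section:
  assumes e: "\<forall>x\<in>X. e x \<in> P \<and> e (f x) = F (e x)" "inj_on e X"
    and r: "\<forall>s\<in>P. r s \<in> X \<and> r (F s) = f (r s)" "\<forall>x\<in>X. r (e x) = x"
    and X: "f ` X \<subseteq> X" "X \<noteq> {}"
  shows "retract P F (e ` X)" "alg_iso X f (e ` X) F"
proof -
  have "F ` e ` X \<subseteq> e ` X"
  proof
    fix t assume "t \<in> F ` e ` X"
    then obtain x where "x \<in> X" "t = F (e x)" by blast
    then show "t \<in> e ` X" using e(1) X(1) by (metis image_eqI image_subset_iff)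
  qed
  then show "retract P F (e ` X)"
    unfolding retract_def using e r X
    by (intro conjI exI[of _ "e \<circ> r"]) (auto simp: image_subset_iff)
  show "alg_iso X f (e ` X) F"
    unfolding alg_iso_def bij_betw_def using e by auto
qed

lemma in_V_of_separating_homs:
  fixes J :: "('a set \<times> nat) set" and X :: "'a set"
  assumes J: "J \<noteq> {}" "fst ` J \<subseteq> K"
    and X: "f ` X \<subseteq> X" "X \<noteq> {}"
    and g: "\<forall>j\<in>J. \<forall>x\<in>X. g j x \<in> fst j \<and> g j (f x) = f (g j x)"
    and k: "\<forall>j\<in>J. \<forall>x\<in>fst j. k j x \<in> X \<and> k j (f x) = f (k j x)"
    and cov: "\<forall>y\<in>X. \<exists>j\<in>J. k j (g j y) = y"
    and inj: "\<forall>y\<in>X. \<forall>z\<in>X. (\<forall>j\<in>J. g j y = g j z) \<longrightarrow> y = z"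
  shows "in_V K f X f"
proof -
  define F where "F = prod_fun J f"
  define P where "P = PiE J fst"
  define e where "e x = restrict (\<lambda>j. g j x) J" for x
  have einj: "inj_on e X"
    using inj unfolding e_def inj_on_def by (metis restrict_apply')
  have e_hom: "\<forall>x\<in>X. e x \<in> P \<and> e (f x) = F (e x)"
    using g X(1) by (auto simp: e_def P_def F_def prod_fun_def)
  define sel where "sel y = (SOME j. j \<in> J \<and> k j (g j y) = y)" for y
  have sel: "sel y \<in> J" "k (sel y) (g (sel y) y) = y" if "y \<in> X" for y
    using someI_ex[OF cov[rule_format, OF that, unfolded Bex_def]] unfolding sel_def by auto
  define \<phi> where "\<phi> t s = k (sel (inv_into X e t)) (s (sel (inv_into X e t)))" for t s
  have \<phi>e: "\<phi> (e x) s = k (sel x) (s (sel x))" if "x \<in> X" for x s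
    using einj that by (simp add: \<phi>_def)
  have \<phi>_diag: "\<phi> (e x) (e x) = x" if "x \<in> X" for x
    using \<phi>e sel that by (simp add: e_def)
  have FR: "F ` e ` X \<subseteq> e ` X"
  proof
    fix t assume "t \<in> F ` e ` X"
    then obtain x where "x \<in> X" "t = F (e x)" by blast
    then show "t \<in> e ` X" using e_hom X(1) by (metis image_eqI image_subset_iff)
  qed
  have \<phi>_hom: "\<phi> t s \<in> X \<and> \<phi> t (F s) = f (\<phi> t s)" if t: "t \<in> e ` X" and s: "s \<in> P" for t s
  proof -
    obtain x where x: "x \<in> X" "t = e x" using t by blast
    have "s (sel x) \<in> fst (sel x)" "F s (sel x) = f (s (sel x))"
      using s sel(1)[OF x(1)] by (auto simp: P_def F_def prod_fun_def)
    then show ?thesis using k sel(1)[OF x(1)] \<phi>e[OF x(1)] x(2) by simp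
  qed
  have \<phi>_diag_hom: "\<forall>t\<in>e ` X. \<phi> (F t) (F t) = f (\<phi> t t)"
  proof
    fix t assume "t \<in> e ` X"
    then obtain x where x: "x \<in> X" "t = e x" by blast
    then have "F t = e (f x)" "f x \<in> X" using e_hom X(1) by auto
    then show "\<phi> (F t) (F t) = f (\<phi> t t)" using \<phi>_diag x by simp
  qed
  obtain x0 where x0: "x0 \<in> X" using X(2) by blast
  have "\<forall>t\<in>e ` X. \<forall>s\<in>P. \<phi> t s \<in> X \<and> \<phi> t (F s) = f (\<phi> t s)"
    using \<phi>_hom by blast
  from hom_from_first_entry[OF FR imageI[OF x0] this \<phi>_diag_hom]
  obtain r where r_hom: "\<forall>s\<in>P. r s \<in> X \<and> r (F s) = f (r s)"
    and r_diag: "\<forall>t\<in>e ` X. r t = \<phi> t t"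
    by blast
  have r: "\<forall>s\<in>P. r s \<in> X \<and> r (F s) = f (r s)" "\<forall>x\<in>X. r (e x) = x"
    using r_hom r_diag \<phi>_diag by auto
  have "retract P F (e ` X) \<and> alg_iso X f (e ` X) F"
    using retract_image_of_section[of X e P f F r] e_hom einj r X by blast
  then show ?thesis
    unfolding in_V_def P_def F_def using J by blast
qed

lemma retract_in_V_self:
  assumes "f ` A \<subseteq> A" "retract A f M"
  shows "in_V {A} f M f"
proof -
  from assms(2) obtain h where M: "M \<noteq> {}" "M \<subseteq> A" "f ` M \<subseteq> M"
    and h: "h ` A \<subseteq> M" "\<forall>x\<in>A. h (f x) = f (h x)" "\<forall>x\<in>M. h x = x"
    unfolding retract_def by blast
  show ?thesis
    apply (rule in_V_of_separating_homs[where J = "{(A, 0)}" and g = "\<lambda>j x. x" and k = "\<lambda>j. h"])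
    using assms(1) M h by auto
qed

section \<open>Backward chains, branches and their isomorphisms\<close>

lemma Ainf_subset: "Ainf M f \<subseteq> M"
  unfolding Ainf_def by blast

lemma Ainf_mono: "M \<subseteq> N \<Longrightarrow> Ainf M f \<subseteq> Ainf N f"
  unfolding Ainf_def by blast

lemma Ainf_f:
  assumes "x \<in> Ainf M f" "f ` M \<subseteq> M"
  shows "f x \<in> Ainf M f"
proof -
  from assms obtain s where s: "s 0 = x" "\<forall>n. s n \<in> M \<and> f (s (Suc n)) = s n"
    unfolding Ainf_def by blast
  define t where "t n = (if n = 0 then f x else s (n - 1))" for n
  have "t 0 = f x" "\<forall>n. t n \<in> M \<and> f (t (Suc n)) = t n"
    using s assms(2) by (auto simp: t_def) (metis One_nat_def Suc_pred)
  moreover have "f x \<in> M" using s assms(2) by blast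
  ultimately show ?thesis unfolding Ainf_def by blast
qed

lemma Ainf_funpow: "x \<in> Ainf M f \<Longrightarrow> f ` M \<subseteq> M \<Longrightarrow> (f ^^ n) x \<in> Ainf M f"
  by (induction n) (auto intro: Ainf_f)

lemma Ainf_if_backward_closed:
  assumes "\<forall>y\<in>H. \<beta> y \<in> H \<and> f (\<beta> y) = y" "y \<in> H"
  shows "y \<in> Ainf H f"
proof -
  have "(\<beta> ^^ n) y \<in> H" for n using assms by (induction n) auto
  then show ?thesis unfolding Ainf_def using assms
    by (auto intro!: exI[of _ "\<lambda>n. (\<beta> ^^ n) y"])
qed

lemma Pset_root: "a \<in> M \<Longrightarrow> a \<in> Pset M f a"
  unfolding Pset_def by (auto intro: exI[of _ 0])

lemma Pset_step:
  assumes "f ` M \<subseteq> M" "z \<in> Pset M f a"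
  shows "z = a \<or> f z \<in> Pset M f a"
proof -
  obtain n where n: "(f ^^ n) z = a" "z \<in> M" using assms(2) unfolding Pset_def by blast
  show ?thesis
  proof (cases n)
    case (Suc m)
    then have "(f ^^ m) (f z) = a" using n by (simp add: funpow_swap1)
    then show ?thesis using n assms(1) by (auto simp: Pset_def)
  qed (use n in simp)
qed

lemma Pset_back: "z \<in> M \<Longrightarrow> f z \<in> Pset M f a \<Longrightarrow> z \<in> Pset M f a"
  unfolding Pset_def by (auto, metis funpow_Suc_right o_apply)

lemma Pset_mono: "M \<subseteq> N \<Longrightarrow> Pset M f a \<subseteq> Pset N f a"
  unfolding Pset_def by auto

lemma Pset_pdom: "f ` M \<subseteq> M \<Longrightarrow> z \<in> Pset M f x \<Longrightarrow> z \<noteq> x \<Longrightarrow> z \<in> pdom (Pset M f x) f"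
  using Pset_step[of f M z x] unfolding pdom_def by blast

lemma partial_iso_refl: "partial_iso S S f"
  unfolding partial_iso_def by (rule exI[of _ id]) auto

lemma partial_iso_sym:
  assumes "partial_iso S T f"
  shows "partial_iso T S f"
proof -
  from assms obtain \<phi> where \<phi>: "bij_betw \<phi> S T" "\<forall>y\<in>S. y \<in> pdom S f \<longleftrightarrow> \<phi> y \<in> pdom T f"
    "\<forall>y\<in>pdom S f. \<phi> (f y) = f (\<phi> y)" unfolding partial_iso_def by blast
  define \<psi> where "\<psi> = inv_into S \<phi>"
  have \<psi>: "bij_betw \<psi> T S" using \<phi>(1) \<psi>_def by (simp add: bij_betw_inv_into)
  have \<psi>S: "\<psi> y \<in> S" "\<phi> (\<psi> y) = y" if "y \<in> T" for y
    using that \<phi>(1) \<psi>_def by (auto simp: bij_betw_def inv_into_into f_inv_into_f)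
  have pd: "y \<in> pdom T f \<longleftrightarrow> \<psi> y \<in> pdom S f" if "y \<in> T" for y
    using \<phi>(2) \<psi>S[OF that] by auto
  have hom: "\<psi> (f y) = f (\<psi> y)" if "y \<in> pdom T f" for y
  proof -
    have yT: "y \<in> T" using that by (simp add: pdom_def)
    have "\<psi> y \<in> pdom S f" using pd yT that by blast
    then have "f (\<psi> y) \<in> S" "\<phi> (f (\<psi> y)) = f y" using \<phi>(3) \<psi>S[OF yT] by (auto simp: pdom_def)
    then show ?thesis using \<phi>(1) \<psi>_def by (metis bij_betw_inv_into_left)
  qed
  show ?thesis unfolding partial_iso_def using \<psi> pd hom by blast
qed

text \<open>The isomorphism carries an infinite backward chain ending in x to one ending in the image
  of x, which lies below y.\<close>

lemma Ainf_if_partial_iso_Pset: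
  assumes fM: "f ` M \<subseteq> M" and iso: "partial_iso (Pset M f x) (Pset M f y) f"
    and x: "x \<in> Ainf M f"
  shows "y \<in> Ainf M f"
proof -
  from iso obtain \<phi> where \<phi>: "bij_betw \<phi> (Pset M f x) (Pset M f y)"
    "\<forall>z\<in>pdom (Pset M f x) f. \<phi> (f z) = f (\<phi> z)" unfolding partial_iso_def by blast
  from x obtain s where s: "s 0 = x" "\<forall>n. s n \<in> M \<and> f (s (Suc n)) = s n"
    unfolding Ainf_def by blast
  have "(f ^^ n) (s n) = x" for n
    by (induction n) (use s in \<open>simp_all add: funpow_swap1\<close>)
  then have sP: "s n \<in> Pset M f x" for n using s by (auto simp: Pset_def)
  have "s (Suc n) \<in> pdom (Pset M f x) f" for n
    using sP s by (auto simp: pdom_def)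
  then have "f (\<phi> (s (Suc n))) = \<phi> (s n)" for n using \<phi>(2) s by metis
  moreover have "\<phi> (s n) \<in> M" for n using \<phi>(1) sP by (auto simp: bij_betw_def Pset_def)
  ultimately have "\<phi> x \<in> Ainf M f"
    unfolding Ainf_def using s(1) by (auto intro!: exI[of _ "\<lambda>n. \<phi> (s n)"])
  moreover have "\<phi> x \<in> Pset M f y" using \<phi>(1) sP[of 0] s(1) by (metis bij_betwE)
  then obtain k where "(f ^^ k) (\<phi> x) = y" unfolding Pset_def by blast
  ultimately show ?thesis using Ainf_funpow fM by metis
qed

section \<open>Simulation of preimages\<close>

definition preimage_simulation :: "'a set \<Rightarrow> ('a \<Rightarrow> 'a) \<Rightarrow> ('a \<Rightarrow> 'a \<Rightarrow> bool) \<Rightarrow> bool" where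
  "preimage_simulation A f R \<longleftrightarrow>
     (\<forall>a b. R a b \<longrightarrow> a \<in> A \<and> b \<in> A \<and> (\<forall>c\<in>A. f c = a \<longrightarrow> (\<exists>d\<in>A. f d = b \<and> R c d)))"

definition preimage_sim :: "'a set \<Rightarrow> ('a \<Rightarrow> 'a) \<Rightarrow> 'a \<Rightarrow> 'a \<Rightarrow> bool" where
  "preimage_sim A f x y \<longleftrightarrow> (\<exists>R. R x y \<and> preimage_simulation A f R)"

lemma preimage_sim_refl: "x \<in> A \<Longrightarrow> preimage_sim A f x x"
  unfolding preimage_sim_def preimage_simulation_def
  by (rule exI[of _ "\<lambda>a b. a = b \<and> a \<in> A"]) auto

lemma preimage_sim_step:
  "preimage_sim A f x y \<Longrightarrow> c \<in> A \<Longrightarrow> f c = x \<Longrightarrow> \<exists>d\<in>A. f d = y \<and> preimage_sim A f c d"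
  unfolding preimage_sim_def preimage_simulation_def by metis

lemma preimage_sim_trans:
  assumes "preimage_sim A f x y" "preimage_sim A f y z"
  shows "preimage_sim A f x z"
proof -
  obtain R S where RS: "R x y" "S y z" "preimage_simulation A f R" "preimage_simulation A f S"
    using assms unfolding preimage_sim_def by blast
  have "preimage_simulation A f (R OO S)"
    unfolding preimage_simulation_def
  proof (intro allI impI conjI ballI)
    fix a b assume "(R OO S) a b"
    then obtain m where m: "R a m" "S m b" by blast
    then show "a \<in> A" "b \<in> A" using RS(3,4) unfolding preimage_simulation_def by blast+
    fix c assume "c \<in> A" "f c = a"
    then obtain d where d: "d \<in> A" "f d = m" "R c d"
      using RS(3) m(1) unfolding preimage_simulation_def by blast
    then obtain e where "e \<in> A" "f e = b" "S d e"
      using RS(4) m(2) unfolding preimage_simulation_def by blast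
    then show "\<exists>e\<in>A. f e = b \<and> (R OO S) c e" using d(3) by blast
  qed
  then show ?thesis unfolding preimage_sim_def using RS(1,2) by blast
qed

text \<open>Inside a retract M, an isomorphism of branches with an acyclic root x is a simulation,
  once composed with the retraction onto M.\<close>

lemma preimage_sim_if_partial_iso_Pset:
  assumes fA: "f ` A \<subseteq> A" and M: "retract A f M"
    and x: "x \<in> M" "\<forall>n. (f ^^ Suc n) x \<noteq> x" and y: "y \<in> M"
    and iso: "partial_iso (Pset M f x) (Pset M f y) f"
  shows "preimage_sim A f x y"
proof -
  from M obtain h where MA: "M \<subseteq> A" and fM: "f ` M \<subseteq> M"
    and h: "h ` A \<subseteq> M" "\<forall>z\<in>A. h (f z) = f (h z)" "\<forall>z\<in>M. h z = z"
    unfolding retract_def by blast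
  from iso obtain \<phi> where \<phi>: "bij_betw \<phi> (Pset M f x) (Pset M f y)"
    "\<forall>z\<in>Pset M f x. z \<in> pdom (Pset M f x) f \<longleftrightarrow> \<phi> z \<in> pdom (Pset M f y) f"
    "\<forall>z\<in>pdom (Pset M f x) f. \<phi> (f z) = f (\<phi> z)" unfolding partial_iso_def by blast
  have xP: "x \<in> Pset M f x" using Pset_root x(1) .
  have "x \<notin> pdom (Pset M f x) f"
  proof
    assume "x \<in> pdom (Pset M f x) f"
    then obtain n where "(f ^^ n) (f x) = x" by (auto simp: pdom_def Pset_def)
    then show False using x(2) by (simp add: funpow_swap1)
  qed
  then have \<phi>x: "\<phi> x = y"
    using \<phi>(1,2) xP Pset_pdom[OF fM] by (metis bij_betwE)
  have hP: "h a \<in> Pset M f x" if "a \<in> Pset A f x" for a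
  proof -
    from that obtain n where n: "(f ^^ n) a = x" "a \<in> A" unfolding Pset_def by blast
    then have "(f ^^ n) (h a) = x" using hom_funpow[OF h(2) fA] h(3) x(1) by metis
    then show ?thesis using h(1) n(2) by (auto simp: Pset_def)
  qed
  define R where "R a b \<longleftrightarrow> a \<in> Pset A f x \<and> b = \<phi> (h a)" for a b
  have "preimage_simulation A f R"
    unfolding preimage_simulation_def
  proof (intro allI impI conjI ballI)
    fix a b assume "R a b"
    then have aP: "a \<in> Pset A f x" and b: "b = \<phi> (h a)" by (auto simp: R_def)
    have bP: "b \<in> Pset M f y" using \<phi>(1) hP[OF aP] b by (metis bij_betwE)
    show "a \<in> A" using aP by (auto simp: Pset_def)
    show "b \<in> A" using bP MA by (auto simp: Pset_def)
    fix c assume c: "c \<in> A" "f c = a"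
    have cP: "c \<in> Pset A f x" using Pset_back aP c by metis
    have "f (h c) = h a" using h(2) c by metis
    then have "h c \<in> pdom (Pset M f x) f" using hP[OF cP] hP[OF aP] by (auto simp: pdom_def)
    then have "f (\<phi> (h c)) = b" using \<phi>(3) \<open>f (h c) = h a\<close> b by metis
    moreover have "\<phi> (h c) \<in> Pset M f y" using \<phi>(1) hP[OF cP] by (metis bij_betwE)
    then have "\<phi> (h c) \<in> A" using MA by (auto simp: Pset_def)
    ultimately show "\<exists>d\<in>A. f d = b \<and> R c d" using cP by (auto simp: R_def)
  qed
  moreover have "R x y" using \<phi>x h(3) x(1) MA by (auto simp: R_def Pset_def intro: exI[of _ 0])
  ultimately show ?thesis unfolding preimage_sim_def by blast
qed

section \<open>Pruning isomorphic branches\<close>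

lemma exists_class_representatives:
  assumes refl: "\<forall>x\<in>S. E x x" and sym: "\<forall>x y. E x y \<longrightarrow> E y x"
    and trans: "\<forall>x y z. E x y \<longrightarrow> E y z \<longrightarrow> E x z"
  shows "\<exists>\<rho>. (\<forall>z\<in>S. \<rho> z \<in> S \<and> E z (\<rho> z) \<and> \<rho> (\<rho> z) = \<rho> z) \<and> (\<forall>z\<in>F. \<rho> z = z) \<and>
    (\<forall>x\<in>S. \<forall>y\<in>S. E x y \<and> \<rho> x = x \<and> \<rho> y = y \<longrightarrow> x = y \<or> x \<in> F \<and> y \<in> F)"
proof -
  define cls where "cls z = {y \<in> S. E z y}" for z
  define rep where "rep C = (if C \<inter> F \<noteq> {} then SOME w. w \<in> C \<inter> F else SOME w. w \<in> C)" for C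
  define \<rho> where "\<rho> z = (if z \<in> F then z else rep (cls z))" for z
  have rep: "rep C \<in> C \<and> (C \<inter> F \<noteq> {} \<longrightarrow> rep C \<in> F)" if "C \<noteq> {}" for C
  proof (cases "C \<inter> F = {}")
    case True
    then show ?thesis using that someI_ex[of "\<lambda>w. w \<in> C"] by (auto simp: rep_def)
  next
    case False
    then show ?thesis using someI_ex[of "\<lambda>w. w \<in> C \<inter> F"] by (auto simp: rep_def)
  qed
  have cls_eq: "cls x = cls y" if "E x y" for x y
    using that sym trans unfolding cls_def by blast
  have self: "z \<in> cls z" if "z \<in> S" for z
    using that refl unfolding cls_def by blast
  have \<rho>_cls: "\<rho> z \<in> cls z" if "z \<in> S" for z
  proof (cases "z \<in> F")
    case False
    then show ?thesis using rep self[OF that] unfolding \<rho>_def by (metis empty_iff)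
  qed (use self[OF that] in \<open>simp add: \<rho>_def\<close>)
  have \<rho>_idem: "\<rho> (\<rho> z) = \<rho> z" if "z \<in> S" for z
  proof (cases "z \<in> F \<or> \<rho> z \<in> F")
    case False
    then have "\<rho> (\<rho> z) = rep (cls (\<rho> z))" "\<rho> z = rep (cls z)" unfolding \<rho>_def by auto
    moreover have "cls (\<rho> z) = cls z" using cls_eq \<rho>_cls[OF that] sym unfolding cls_def by blast
    ultimately show ?thesis by simp
  next
    case True
    then show ?thesis unfolding \<rho>_def by auto
  qed
  have \<rho>_unique: "x = y \<or> x \<in> F \<and> y \<in> F"
    if "x \<in> S" "y \<in> S" "E x y" "\<rho> x = x" "\<rho> y = y" for x y
  proof -
    have cls: "cls x = cls y" using cls_eq that(3) .
    show ?thesis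
    proof (cases "x \<in> F \<or> y \<in> F")
      case True
      then have "cls x \<inter> F \<noteq> {}" using self that(1,2) cls by blast
      then have "rep (cls x) \<in> F" using rep self[OF that(1)] by blast
      then show ?thesis using that(4,5) cls unfolding \<rho>_def by metis
    next
      case False
      then show ?thesis using that(4,5) cls unfolding \<rho>_def by metis
    qed
  qed
  show ?thesis
    using \<rho>_cls \<rho>_idem \<rho>_unique unfolding cls_def
    by (intro exI[of _ \<rho>]) (auto simp: \<rho>_def)
qed

definition fixed_forward_orbits :: "'a set \<Rightarrow> ('a \<Rightarrow> 'a) \<Rightarrow> 'a set \<Rightarrow> ('a \<Rightarrow> 'a) \<Rightarrow> 'a set" where
  "fixed_forward_orbits A f D \<rho> = {z \<in> A. \<forall>k. (f ^^ k) z \<notin> D \<longrightarrow> \<rho> ((f ^^ k) z) = (f ^^ k) z}"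

lemma fixed_forward_orbits_subalgebra:
  assumes "f ` A \<subseteq> A" "D \<subseteq> A" "f ` D \<subseteq> D"
  shows "D \<subseteq> fixed_forward_orbits A f D \<rho>" "fixed_forward_orbits A f D \<rho> \<subseteq> A"
    "f ` fixed_forward_orbits A f D \<rho> \<subseteq> fixed_forward_orbits A f D \<rho>"
proof -
  show "D \<subseteq> fixed_forward_orbits A f D \<rho>"
    using assms(2) funpow_closed[OF assms(3)] unfolding fixed_forward_orbits_def by blast
  show "fixed_forward_orbits A f D \<rho> \<subseteq> A" unfolding fixed_forward_orbits_def by blast
  have "(f ^^ k) (f z) = (f ^^ Suc k) z" for k z by (simp add: funpow_swap1)
  then show "f ` fixed_forward_orbits A f D \<rho> \<subseteq> fixed_forward_orbits A f D \<rho>"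
    using assms(1) unfolding fixed_forward_orbits_def by (auto simp del: funpow.simps)
qed

lemma fixed_forward_orbits_back:
  assumes "x \<in> A" "x \<in> D \<or> \<rho> x = x" "f x \<in> fixed_forward_orbits A f D \<rho>"
  shows "x \<in> fixed_forward_orbits A f D \<rho>"
proof -
  have "(f ^^ k) x \<notin> D \<longrightarrow> \<rho> ((f ^^ k) x) = (f ^^ k) x" for k
  proof (cases k)
    case 0
    then show ?thesis using assms(2) by auto
  next
    case (Suc m)
    then have "(f ^^ k) x = (f ^^ m) (f x)" by (simp add: funpow_swap1)
    then show ?thesis using assms(3) unfolding fixed_forward_orbits_def by auto
  qed
  then show ?thesis using assms(1) unfolding fixed_forward_orbits_def by blast
qed

text \<open>The retraction is built by induction on the distance to D: a point outside the subalgebra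
  is sent to the representative of a preimage of the image of its successor that simulates it.\<close>

lemma retract_fixed_forward_orbits:
  assumes fA: "f ` A \<subseteq> A" and D: "D \<subseteq> A" "f ` D \<subseteq> D"
    and reach: "\<forall>z\<in>A. \<exists>n. (f ^^ n) z \<in> D"
    and \<rho>: "\<forall>z\<in>A - D. \<rho> z \<in> A - D \<and> f (\<rho> z) = f z \<and> preimage_sim A f z (\<rho> z) \<and> \<rho> (\<rho> z) = \<rho> z"
    and Dne: "D \<noteq> {}"
  shows "retract A f (fixed_forward_orbits A f D \<rho>)"
proof -
  define M where "M = fixed_forward_orbits A f D \<rho>"
  note M = fixed_forward_orbits_subalgebra[OF fA D, of \<rho>, folded M_def]
  define dist where "dist z = (LEAST n. (f ^^ n) z \<in> D)" for z
  define pick where "pick z y = (SOME c. c \<in> A \<and> f c = y \<and> preimage_sim A f z c)" for z y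
  define \<rho>' where "\<rho>' z = (if z \<in> D then z else \<rho> z)" for z
  define hh where "hh = rec_nat (\<lambda>z. z) (\<lambda>n H z. if z \<in> M then z else \<rho>' (pick z (H (f z))))"
  define h where "h z = hh (dist z) z" for z
  have hh0: "hh 0 z = z" for z by (simp add: hh_def)
  have hhS: "hh (Suc n) z = (if z \<in> M then z else \<rho>' (pick z (hh n (f z))))" for n z
    by (simp add: hh_def)
  have distD: "(f ^^ dist z) z \<in> D" if "z \<in> A" for z
    unfolding dist_def using reach that by (meson LeastI)
  have dist0: "dist z = 0 \<longleftrightarrow> z \<in> D" if "z \<in> A" for z
    using distD[OF that] unfolding dist_def by (auto intro: Least_eq_0)
  have distf: "dist (f z) = dist z - 1" if "z \<in> A" "z \<notin> D" for z
  proof -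
    obtain n where n: "(f ^^ n) z \<in> D" using reach \<open>z \<in> A\<close> by blast
    have "dist (f z) = (LEAST k. (f ^^ Suc k) z \<in> D)" unfolding dist_def by (simp add: funpow_swap1)
    also have "\<dots> = dist z - 1"
      unfolding dist_def by (rule Least_Suc_eq_Least_minus_1[of _ n]) (use n that in auto)
    finally show ?thesis .
  qed
  have main: "\<forall>z\<in>A. dist z = n \<longrightarrow>
      h z \<in> M \<and> preimage_sim A f z (h z) \<and> f (h z) = h (f z) \<and> (z \<in> M \<longrightarrow> h z = z)" for n
  proof (induction n)
    case 0
    show ?case
    proof (intro ballI impI)
      fix z assume z: "z \<in> A" "dist z = 0"
      then have "z \<in> D" "f z \<in> D" using dist0 D(2) by auto
      then have "dist z = 0" "dist (f z) = 0" using z dist0 D(1) by auto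
      then have "h z = z" "h (f z) = f z" by (simp_all add: h_def hh0)
      then show "h z \<in> M \<and> preimage_sim A f z (h z) \<and> f (h z) = h (f z) \<and> (z \<in> M \<longrightarrow> h z = z)"
        using \<open>z \<in> D\<close> M(1) preimage_sim_refl[OF z(1)] by auto
    qed
  next
    case (Suc m)
    show ?case
    proof (intro ballI impI)
      fix z assume z: "z \<in> A" "dist z = Suc m"
      then have zD: "z \<notin> D" using dist0[OF z(1)] by simp
      then have df: "dist (f z) = m" using distf z by simp
      have IH: "h (f z) \<in> M" "preimage_sim A f (f z) (h (f z))" "f z \<in> M \<longrightarrow> h (f z) = f z"
        using Suc[rule_format, of "f z"] fA z(1) df by auto
      have hz: "h z = (if z \<in> M then z else \<rho>' (pick z (h (f z))))"
        using z df by (simp add: h_def hhS)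
      show "h z \<in> M \<and> preimage_sim A f z (h z) \<and> f (h z) = h (f z) \<and> (z \<in> M \<longrightarrow> h z = z)"
      proof (cases "z \<in> M")
        case True
        then have "h z = z" "f z \<in> M" using hz M(3) by auto
        then show ?thesis using True IH(3) preimage_sim_refl[OF z(1)] by simp
      next
        case False
        define c where "c = pick z (h (f z))"
        have "\<exists>c. c \<in> A \<and> f c = h (f z) \<and> preimage_sim A f z c"
          using preimage_sim_step[OF IH(2) z(1)] by auto
        then have "c \<in> A \<and> f c = h (f z) \<and> preimage_sim A f z c"
          unfolding c_def pick_def by (rule someI_ex)
        then have c: "c \<in> A" "f c = h (f z)" "preimage_sim A f z c" by auto
        show ?thesis
        proof (cases "c \<in> D")
          case True
          then have "h z = c" using hz False by (simp add: \<rho>'_def c_def)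
          then show ?thesis using True c M(1) False by auto
        next
          case cD: False
          then have "\<rho> c \<in> A - D" "f (\<rho> c) = h (f z)" "preimage_sim A f c (\<rho> c)" "\<rho> (\<rho> c) = \<rho> c"
            using \<rho> c by auto
          moreover have "preimage_sim A f z (\<rho> c)"
            using preimage_sim_trans c(3) calculation(3) .
          moreover have "\<rho> c \<in> M"
            using fixed_forward_orbits_back[of "\<rho> c" A D \<rho> f] calculation(1,2,4) IH(1)
            unfolding M_def by simp
          moreover have "h z = \<rho> c" using hz False cD by (simp add: \<rho>'_def c_def)
          ultimately show ?thesis using False by simp
        qed
      qed
    qed
  qed
  have h: "h z \<in> M \<and> f (h z) = h (f z) \<and> (z \<in> M \<longrightarrow> h z = z)" if "z \<in> A" for z
    using main[of "dist z"] that by blast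
  have "h ` A \<subseteq> M" "\<forall>z\<in>A. h (f z) = f (h z)" "\<forall>z\<in>M. h z = z"
    using h M(2) by auto
  moreover have "M \<noteq> {}" using M(1) Dne by blast
  ultimately show ?thesis
    unfolding retract_def M_def[symmetric] using M(2,3) by blast
qed

lemma funpow_eq_if_siblings_outside:
  assumes fA: "f ` A \<subseteq> A" and D: "f ` D \<subseteq> D" and acyc: "\<forall>z\<in>A - D. \<forall>n. (f ^^ Suc n) z \<noteq> z"
    and x: "x \<in> A" and ij: "(f ^^ i) x \<notin> D" "(f ^^ j) x \<notin> D" "f ((f ^^ i) x) = f ((f ^^ j) x)"
  shows "i = j"
proof -
  have False if ab: "a < b" "(f ^^ b) x \<notin> D" "(f ^^ Suc a) x = (f ^^ Suc b) x" for a b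
  proof -
    define c where "c = (f ^^ Suc a) x"
    have "(f ^^ Suc (b - a - 1)) c = c"
      using funpow_cycle_of_eq[OF ab(3)] ab(1) unfolding c_def by simp
    moreover have "(f ^^ (b - Suc a)) c = (f ^^ b) x"
      using ab(1) unfolding c_def funpow_funpow by simp
    then have "c \<notin> D" using ab(2) funpow_closed[OF D] by metis
    moreover have "c \<in> A" using funpow_closed[OF fA x] unfolding c_def .
    ultimately show False using acyc by blast
  qed
  then show ?thesis using ij by (metis funpow.simps(2) o_apply linorder_neqE_nat)
qed

lemma exists_pruned_retract:
  assumes fA: "f ` A \<subseteq> A" and D: "D \<subseteq> A" "f ` D \<subseteq> D"
    and reach: "\<forall>z\<in>A. \<exists>n. (f ^^ n) z \<in> D"
    and acyc: "\<forall>z\<in>A - D. \<forall>n. (f ^^ Suc n) z \<noteq> z"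
    and F: "F \<subseteq> A" "f ` F \<subseteq> F \<union> D" and Dne: "D \<noteq> {}"
  shows "\<exists>M. retract A f M \<and> D \<subseteq> M \<and> F \<subseteq> M \<and> (\<forall>x\<in>M - D. \<forall>y\<in>M - D.
     f x = f y \<and> partial_iso (Pset M f x) (Pset M f y) f \<longrightarrow> x = y \<or> x \<in> F \<and> y \<in> F)"
proof -
  define E where "E x y \<longleftrightarrow> f x = f y \<and> preimage_sim A f x y \<and> preimage_sim A f y x" for x y
  have "\<forall>x\<in>A - D. E x x" unfolding E_def by (simp add: preimage_sim_refl)
  moreover have "\<forall>x y. E x y \<longrightarrow> E y x" unfolding E_def by auto
  moreover have "\<forall>x y z. E x y \<longrightarrow> E y z \<longrightarrow> E x z"
  proof (intro allI impI)
    fix x y z assume "E x y" "E y z"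
    then have "f x = f z" "preimage_sim A f x y" "preimage_sim A f y z" "preimage_sim A f z y"
      "preimage_sim A f y x" unfolding E_def by auto
    then show "E x z" unfolding E_def using preimage_sim_trans by metis
  qed
  ultimately
  have "\<exists>\<rho>. (\<forall>z\<in>A - D. \<rho> z \<in> A - D \<and> E z (\<rho> z) \<and> \<rho> (\<rho> z) = \<rho> z) \<and> (\<forall>z\<in>F. \<rho> z = z) \<and>
    (\<forall>x\<in>A - D. \<forall>y\<in>A - D. E x y \<and> \<rho> x = x \<and> \<rho> y = y \<longrightarrow> x = y \<or> x \<in> F \<and> y \<in> F)"
    by (rule exists_class_representatives)
  then obtain \<rho> where \<rho>: "\<forall>z\<in>A - D. \<rho> z \<in> A - D \<and> E z (\<rho> z) \<and> \<rho> (\<rho> z) = \<rho> z"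
    and \<rho>F: "\<forall>z\<in>F. \<rho> z = z"
    and \<rho>_unique: "\<forall>x\<in>A - D. \<forall>y\<in>A - D. E x y \<and> \<rho> x = x \<and> \<rho> y = y \<longrightarrow> x = y \<or> x \<in> F \<and> y \<in> F"
    by (elim exE conjE)
  define M where "M = fixed_forward_orbits A f D \<rho>"
  have "\<forall>z\<in>A - D. \<rho> z \<in> A - D \<and> f (\<rho> z) = f z \<and> preimage_sim A f z (\<rho> z) \<and> \<rho> (\<rho> z) = \<rho> z"
  proof
    fix z assume "z \<in> A - D"
    then have "\<rho> z \<in> A - D" "E z (\<rho> z)" "\<rho> (\<rho> z) = \<rho> z" using \<rho> by blast+
    then show "\<rho> z \<in> A - D \<and> f (\<rho> z) = f z \<and> preimage_sim A f z (\<rho> z) \<and> \<rho> (\<rho> z) = \<rho> z"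
      unfolding E_def by simp
  qed
  then have retM: "retract A f M"
    unfolding M_def by (rule retract_fixed_forward_orbits[OF fA D reach _ Dne])
  have FD: "f ` (F \<union> D) \<subseteq> F \<union> D" using F(2) D(2) by blast
  have "z \<in> M" if z: "z \<in> F" for z
  proof -
    have "\<rho> ((f ^^ k) z) = (f ^^ k) z" if "(f ^^ k) z \<notin> D" for k
      using funpow_closed[OF FD, of z k] z that \<rho>F by blast
    then show ?thesis using F(1) z unfolding M_def fixed_forward_orbits_def by blast
  qed
  then have "F \<subseteq> M" by blast
  moreover have "x = y \<or> x \<in> F \<and> y \<in> F"
    if xy: "x \<in> M - D" "y \<in> M - D" "f x = f y" "partial_iso (Pset M f x) (Pset M f y) f" for x y
  proof -
    have "M \<subseteq> A" using retM unfolding retract_def by blast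
    then have "x \<in> A - D" "y \<in> A - D" using xy by auto
    then have "preimage_sim A f x y" "preimage_sim A f y x"
      using preimage_sim_if_partial_iso_Pset[OF fA retM] partial_iso_sym[OF xy(4)] xy(1,2,4) acyc
      by blast+
    moreover have "\<rho> x = x" "\<rho> y = y"
      using xy unfolding M_def fixed_forward_orbits_def by (auto dest: spec[of _ 0])
    moreover have "E x y" unfolding E_def using xy(3) calculation(1,2) by blast
    ultimately show ?thesis using \<rho>_unique \<open>x \<in> A - D\<close> \<open>y \<in> A - D\<close> by blast
  qed
  ultimately show ?thesis
    using retM fixed_forward_orbits_subalgebra(1)[OF fA D] unfolding M_def by blast
qed

corollary exists_pruned_retract_siblings:
  assumes fA: "f ` A \<subseteq> A" and D: "D \<subseteq> A" "f ` D \<subseteq> D"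
    and reach: "\<forall>z\<in>A. \<exists>n. (f ^^ n) z \<in> D"
    and acyc: "\<forall>z\<in>A - D. \<forall>n. (f ^^ Suc n) z \<noteq> z"
    and uv: "u \<in> A - D" "v \<in> A" "f u = f v" and Dne: "D \<noteq> {}"
  shows "\<exists>M. retract A f M \<and> D \<subseteq> M \<and> u \<in> M \<and> v \<in> M \<and> (\<forall>x\<in>M - D. \<forall>y\<in>M - D.
     f x = f y \<and> partial_iso (Pset M f x) (Pset M f y) f \<longrightarrow> x = y \<or> x \<in> {u, v} \<and> y \<in> {u, v})"
proof -
  define F where "F = insert v (range (\<lambda>k. (f ^^ k) u))"
  have u: "u \<in> A" "u \<notin> D" using uv by auto
  have "F \<subseteq> A" unfolding F_def using funpow_closed[OF fA u(1)] uv(2) by blast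
  moreover have "f ` F \<subseteq> F \<union> D"
  proof
    fix y assume "y \<in> f ` F"
    then consider "y = f v" | k where "y = f ((f ^^ k) u)" unfolding F_def by blast
    then show "y \<in> F \<union> D"
    proof cases
      case 1
      then have "y = (f ^^ Suc 0) u" using uv(3) by simp
      then show ?thesis unfolding F_def by blast
    next
      case (2 k)
      then have "y = (f ^^ Suc k) u" by simp
      then show ?thesis unfolding F_def by blast
    qed
  qed
  ultimately have "\<exists>M. retract A f M \<and> D \<subseteq> M \<and> F \<subseteq> M \<and> (\<forall>x\<in>M - D. \<forall>y\<in>M - D.
     f x = f y \<and> partial_iso (Pset M f x) (Pset M f y) f \<longrightarrow> x = y \<or> x \<in> F \<and> y \<in> F)"
    by (rule exists_pruned_retract[OF fA D reach acyc _ _ Dne])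
  then obtain M where M: "retract A f M" "D \<subseteq> M" "F \<subseteq> M" and pruned: "\<forall>x\<in>M - D. \<forall>y\<in>M - D.
     f x = f y \<and> partial_iso (Pset M f x) (Pset M f y) f \<longrightarrow> x = y \<or> x \<in> F \<and> y \<in> F"
    by (elim exE conjE)
  have orbit_inj: "i = j" if "(f ^^ i) u \<notin> D" "(f ^^ j) u \<notin> D" "f ((f ^^ i) u) = f ((f ^^ j) u)" for i j
    using funpow_eq_if_siblings_outside[OF fA D(2) acyc u(1) that] .
  have sib: "w \<in> {u, v}" if w: "w \<in> F" "w' \<in> F" "w \<notin> D" "w' \<notin> D" "f w = f w'" "w \<noteq> w'" for w w'
  proof (cases "w = v")
    case False
    then obtain i where i: "w = (f ^^ i) u" using w(1) unfolding F_def by blast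
    consider "w' = v" | j where "w' = (f ^^ j) u" using w(2) unfolding F_def by blast
    then show ?thesis
    proof cases
      case 1
      then have "f ((f ^^ i) u) = f ((f ^^ 0) u)" using w(5) i uv(3) by simp
      then have "i = 0" using orbit_inj w(3) i u(2) by simp
      then show ?thesis using i by simp
    next
      case (2 j)
      then have "i = j" using orbit_inj w(3,4,5) i by simp
      then show ?thesis using i 2 w(6) by simp
    qed
  qed simp
  have "(f ^^ 0) u \<in> F" "v \<in> F" unfolding F_def by blast+
  then have "u \<in> M" "v \<in> M" using M(3) by auto
  moreover have "x = y \<or> x \<in> {u, v} \<and> y \<in> {u, v}"
    if "x \<in> M - D" "y \<in> M - D" "f x = f y" "partial_iso (Pset M f x) (Pset M f y) f" for x y
    using pruned that sib[of x y] sib[of y x] by auto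
  ultimately show ?thesis using M(1,2) by blast
qed

section \<open>Connected monounary algebras\<close>

lemma cycle_in_Ainf:
  assumes "f ` A \<subseteq> A" "x \<in> A" "(f ^^ Suc n) x = x"
  shows "x \<in> Ainf A f"
proof -
  define \<sigma> where "\<sigma> j = (f ^^ (n * j)) x" for j
  have "f (\<sigma> (Suc j)) = \<sigma> j" for j
  proof -
    have "f (\<sigma> (Suc j)) = (f ^^ (n * j)) ((f ^^ Suc n) x)"
      unfolding \<sigma>_def funpow_funpow by (simp add: add.commute)
    then show ?thesis using assms(3) \<sigma>_def by simp
  qed
  moreover have "\<sigma> j \<in> A" for j using funpow_closed[OF assms(1,2)] \<sigma>_def by simp
  ultimately show ?thesis
    unfolding Ainf_def using assms(2) by (auto intro!: exI[of _ \<sigma>] simp: \<sigma>_def)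
qed

lemma Pset_disjoint_Ainf:
  assumes "f ` A \<subseteq> A" "a \<notin> Ainf A f" "z \<in> Pset A f a"
  shows "z \<notin> Ainf A f"
proof
  assume "z \<in> Ainf A f"
  moreover obtain n where "(f ^^ n) z = a" using assms(3) unfolding Pset_def by blast
  ultimately show False using Ainf_funpow[OF _ assms(1)] assms(2) by metis
qed

lemma funpow_inj_if_acyclic:
  assumes acyc: "\<forall>z\<in>A. \<forall>n. (f ^^ Suc n) z \<noteq> z" and fA: "f ` A \<subseteq> A" and x: "x \<in> A"
    and eq: "(f ^^ i) x = (f ^^ j) x"
  shows "i = j"
proof -
  have False if "a < b" "(f ^^ a) x = (f ^^ b) x" for a b
    using funpow_cycle_of_eq[OF that(2,1)] acyc funpow_closed[OF fA x] by blast
  then show ?thesis using eq by (metis linorder_neqE_nat)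
qed

lemma card_le_2_if_subset_pair:
  assumes "S \<subseteq> {a, b}"
  shows "card S \<le> 2"
proof -
  have "card S \<le> card {a, b}" using assms by (rule card_mono[rotated]) simp
  also have "\<dots> \<le> 2" by (cases "a = b") simp_all
  finally show ?thesis .
qed

lemma card_le_2_if_pairwise:
  assumes "\<forall>x\<in>S. \<forall>y\<in>S. x = y \<or> x \<in> {a, b} \<and> y \<in> {a, b}"
  shows "card S \<le> 2"
proof (cases "S \<subseteq> {a, b}")
  case False
  then obtain x where "x \<in> S" "x \<notin> {a, b}" by blast
  then have "S \<subseteq> {x, x}" using assms by blast
  then show ?thesis by (rule card_le_2_if_subset_pair)
qed (rule card_le_2_if_subset_pair)

lemma card_le_2_if_inj_bool:
  fixes Q :: "'a \<Rightarrow> bool"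
  shows "inj_on Q S \<Longrightarrow> card S \<le> 2"
  using card_inj_on_le[of Q S UNIV] by (simp add: card_UNIV_bool)

lemma triple_partial_iso:
  assumes "partial_iso (P x1) (P x2) f" "partial_iso (P x1) (P x3) f" "partial_iso (P x2) (P x3) f"
  shows "\<forall>x\<in>{x1, x2, x3}. \<forall>y\<in>{x1, x2, x3}. partial_iso (P x) (P y) f"
  using assms partial_iso_refl partial_iso_sym[OF assms(1)] partial_iso_sym[OF assms(2)]
    partial_iso_sym[OF assms(3)] by blast

definition isomorphic_siblings :: "'a set \<Rightarrow> ('a \<Rightarrow> 'a) \<Rightarrow> 'a set \<Rightarrow> bool" where
  "isomorphic_siblings M f S \<longleftrightarrow>
     S \<subseteq> M \<and> (\<forall>x\<in>S. \<forall>y\<in>S. f x = f y \<and> partial_iso (Pset M f x) (Pset M f y) f)"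

lemma star_condI:
  assumes "\<And>S x0. isomorphic_siblings M f S \<Longrightarrow> x0 \<in> S \<Longrightarrow> card S \<le> 2"
  shows "star_cond M f"
  unfolding star_cond_def
proof (intro ballI impI)
  fix x1 x2 x3 assume xs: "x1 \<in> M" "x2 \<in> M" "x3 \<in> M"
    and H: "f x1 = f x2 \<and> f x2 = f x3 \<and> partial_iso (Pset M f x1) (Pset M f x2) f \<and>
      partial_iso (Pset M f x1) (Pset M f x3) f \<and> partial_iso (Pset M f x2) (Pset M f x3) f"
  have "partial_iso (Pset M f x1) (Pset M f x2) f" "partial_iso (Pset M f x1) (Pset M f x3) f"
    "partial_iso (Pset M f x2) (Pset M f x3) f" using H by blast+
  note iso = triple_partial_iso[where P = "\<lambda>x. Pset M f x", OF this]
  have "isomorphic_siblings M f {x1, x2, x3}"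
    unfolding isomorphic_siblings_def using xs H iso by auto
  then show "card {x1, x2, x3} \<le> 2" using assms by blast
qed

lemma star_cond_pruned_outside:
  assumes D_inj: "\<forall>x\<in>D. \<forall>y\<in>D. f x = f y \<longrightarrow> x = y" and D_u: "\<forall>x\<in>D. f x \<noteq> f u"
    and uv: "f u = f v"
    and pruned: "\<forall>x\<in>M - D. \<forall>y\<in>M - D.
       f x = f y \<and> partial_iso (Pset M f x) (Pset M f y) f \<longrightarrow> x = y \<or> x \<in> {u, v} \<and> y \<in> {u, v}"
  shows "star_cond M f"
proof (rule star_condI)
  fix S x0 assume S: "isomorphic_siblings M f S" and x0: "x0 \<in> S"
  have sib: "f x = f x0" if "x \<in> S" for x using S x0 that unfolding isomorphic_siblings_def by blast
  have pr: "x = y \<or> x \<in> {u, v} \<and> y \<in> {u, v}" if xy: "x \<in> S" "y \<in> S" "x \<notin> D" "y \<notin> D" for x y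
  proof -
    have "x \<in> M - D" "y \<in> M - D" using S xy unfolding isomorphic_siblings_def by blast+
    then show ?thesis using pruned S xy(1,2) unfolding isomorphic_siblings_def by blast
  qed
  show "card S \<le> 2"
  proof (cases "f x0 = f u")
    case True
    then have "x \<notin> D" if "x \<in> S" for x using D_u sib[OF that] by metis
    then show ?thesis using pr by (intro card_le_2_if_pairwise) blast
  next
    case False
    have "inj_on (\<lambda>x. x \<in> D) S"
    proof (rule inj_onI)
      fix x y assume xy: "x \<in> S" "y \<in> S" "(x \<in> D) = (y \<in> D)"
      show "x = y"
      proof (cases "x \<in> D")
        case True
        then show ?thesis using D_inj xy sib[OF xy(1)] sib[OF xy(2)] by simp
      next
        case notD: False
        have "f x \<noteq> f u" using False sib xy(1) by simp
        then show ?thesis using pr[OF xy(1,2) notD] xy(3) notD uv by auto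
      qed
    qed
    then show ?thesis by (rule card_le_2_if_inj_bool)
  qed
qed

definition retraction :: "'a set \<Rightarrow> ('a \<Rightarrow> 'a) \<Rightarrow> 'a set \<Rightarrow> ('a \<Rightarrow> 'a) \<Rightarrow> bool" where
  "retraction A f M h \<longleftrightarrow> h ` A \<subseteq> M \<and> (\<forall>x\<in>A. h (f x) = f (h x)) \<and> (\<forall>x\<in>M. h x = x)"

definition Ainf_preserving :: "'a set \<Rightarrow> ('a \<Rightarrow> 'a) \<Rightarrow> 'a set \<Rightarrow> ('a \<Rightarrow> 'a) \<Rightarrow> bool" where
  "Ainf_preserving A f M h \<longleftrightarrow> (\<forall>x\<in>A. x \<notin> M \<and> f x \<in> Ainf M f \<longrightarrow> h x \<in> Ainf M f)"

text \<open>Separating maps will be indexed by retracts alone, so each retract gets one fixed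
  retraction, chosen \<open>Ainf_preserving\<close> whenever possible.\<close>

definition canonical_retraction :: "'a set \<Rightarrow> ('a \<Rightarrow> 'a) \<Rightarrow> 'a set \<Rightarrow> 'a \<Rightarrow> 'a" where
  "canonical_retraction A f M =
     (if \<exists>h. retraction A f M h \<and> Ainf_preserving A f M h
      then SOME h. retraction A f M h \<and> Ainf_preserving A f M h
      else SOME h. retraction A f M h)"

lemma retract_iff_retraction:
  "retract A f M \<longleftrightarrow> M \<noteq> {} \<and> M \<subseteq> A \<and> f ` M \<subseteq> M \<and> (\<exists>h. retraction A f M h)"
  unfolding retract_def retraction_def by (rule refl)

lemma canonical_retraction:
  assumes "retract A f M"
  shows "retraction A f M (canonical_retraction A f M)"
proof (cases "\<exists>h. retraction A f M h \<and> Ainf_preserving A f M h")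
  case True
  from someI_ex[OF True] show ?thesis
    unfolding canonical_retraction_def if_P[OF True] by (rule conjunct1)
next
  case False
  have "\<exists>h. retraction A f M h" using assms unfolding retract_iff_retraction by (elim conjE)
  from someI_ex[OF this] show ?thesis
    unfolding canonical_retraction_def if_not_P[OF False] .
qed

lemma canonical_retraction_Ainf_preserving:
  assumes "retraction A f M h" "Ainf_preserving A f M h"
  shows "Ainf_preserving A f M (canonical_retraction A f M)"
proof -
  have ex: "\<exists>h. retraction A f M h \<and> Ainf_preserving A f M h" using assms by blast
  show ?thesis unfolding canonical_retraction_def using someI_ex[OF ex] ex by simp
qed

lemma canonical_retraction_fixes:
  "retract A f M \<Longrightarrow> x \<in> M \<Longrightarrow> canonical_retraction A f M x = x"
  using canonical_retraction unfolding retraction_def by blast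

definition inf_core :: "'a set \<Rightarrow> ('a \<Rightarrow> 'a) \<Rightarrow> 'a set \<Rightarrow> bool" where
  "inf_core A f H \<longleftrightarrow> H \<subseteq> Ainf A f \<and> retract A f H \<and> S0 H f \<and>
     (\<forall>q\<in>H. \<exists>a b. \<forall>x\<in>H. f x = q \<longrightarrow> x = a \<or> x = b) \<and> (\<forall>x\<in>H. x \<in> Ainf H f)"

lemma inf_coreD:
  assumes "inf_core A f H"
  shows "H \<subseteq> Ainf A f" "retract A f H" "S0 H f" "f ` H \<subseteq> H" "H \<subseteq> A" "H \<noteq> {}"
    "H \<subseteq> Ainf H f"
  using assms Ainf_subset unfolding inf_core_def retract_def by blast+

lemma alg_iso_inv:
  assumes bij: "bij_betw \<psi> B H" and hom: "\<forall>x\<in>B. \<psi> (g x) = f (\<psi> x)" and gB: "g ` B \<subseteq> B"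
  shows "alg_iso H f B g"
proof -
  define h where "h = inv_into B \<psi>"
  have hb: "bij_betw h H B" using bij h_def by (simp add: bij_betw_inv_into)
  have "h (f y) = g (h y)" if y: "y \<in> H" for y
  proof -
    have x: "h y \<in> B" "\<psi> (h y) = y"
      using y bij h_def by (auto simp: bij_betw_def inv_into_into f_inv_into_f)
    have "f y = \<psi> (g (h y))" using hom x by metis
    moreover have "g (h y) \<in> B" using gB x by blast
    ultimately show ?thesis using bij h_def by (simp add: bij_betw_def)
  qed
  then show ?thesis unfolding alg_iso_def using hb by blast
qed

definition has_S_retract_basis :: "'a set \<Rightarrow> ('a \<Rightarrow> 'a) \<Rightarrow> bool" where
  "has_S_retract_basis A f \<longleftrightarrow> (\<exists>\<B>. (\<forall>M\<in>\<B>. retract A f M \<and> S_class M f) \<and>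
     in_V \<B> f A f \<and> (\<forall>M\<in>\<B>. in_V {A} f M f))"

locale connected_unary =
  fixes A :: "'a set" and f :: "'a \<Rightarrow> 'a"
  assumes closed: "f ` A \<subseteq> A" and nonempty: "A \<noteq> {}"
    and connected: "\<forall>x\<in>A. \<forall>y\<in>A. \<exists>m n. (f ^^ m) x = (f ^^ n) y"
begin

abbreviation K :: "'a set" where "K \<equiv> Ainf A f"

lemma f_in: "x \<in> A \<Longrightarrow> f x \<in> A"
  using closed by blast

lemma funpow_in: "x \<in> A \<Longrightarrow> (f ^^ n) x \<in> A"
  using funpow_closed[OF closed] .

lemma K_subset: "K \<subseteq> A"
  by (rule Ainf_subset)

lemma f_K: "x \<in> K \<Longrightarrow> f x \<in> K"
  using Ainf_f[OF _ closed] .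

lemma reaches_subalgebra:
  assumes "H \<noteq> {}" "f ` H \<subseteq> H" "x \<in> A" "H \<subseteq> A"
  shows "\<exists>t. (f ^^ t) x \<in> H"
proof -
  obtain w where w: "w \<in> H" using assms(1) by blast
  then obtain m n where "(f ^^ m) x = (f ^^ n) w" using connected assms by blast
  then show ?thesis using funpow_closed[OF assms(2) w] by metis
qed

lemma connected_subset: "H \<subseteq> A \<Longrightarrow> connected_alg H f"
  unfolding connected_alg_def using connected by blast

lemma U_star_c_subset: "H \<subseteq> A \<Longrightarrow> H \<noteq> {} \<Longrightarrow> f ` H \<subseteq> H \<Longrightarrow> star_cond H f \<Longrightarrow> U_star_c H f"
  unfolding U_star_c_def mono_alg_def using connected_subset by blast

lemma inf_coreI:
  assumes H: "H \<subseteq> A" "H \<noteq> {}" "f ` H \<subseteq> H" and \<beta>: "\<forall>y\<in>H. \<beta> y \<in> H \<and> f (\<beta> y) = y"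
    and preimages: "\<forall>q\<in>H. \<exists>a b. \<forall>x\<in>H. f x = q \<longrightarrow> x = a \<or> x = b"
    and iso: "S0 H f"
  shows "inf_core A f H"
proof -
  have HA: "\<forall>x\<in>H. x \<in> Ainf H f" using Ainf_if_backward_closed[OF \<beta>] by blast
  have "\<forall>x\<in>A. \<exists>t. (f ^^ t) x \<in> H" using reaches_subalgebra H by blast
  then have "retract A f H" using retract_of_onto_subalgebra[OF closed H \<beta>] by blast
  then show ?thesis unfolding inf_core_def using HA Ainf_mono[OF H(1)] preimages iso by blast
qed

text \<open>Homomorphisms that fix every point somewhere and separate all pairs of distinct siblings
  separate all points: two points identified by every map must meet under f (using the cycle,
  if there is one, and otherwise the absence of cycles), and the last step before they meet
  is a pair of siblings.\<close>

lemma meet_if_homs_agree: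
  assumes J: "J \<noteq> {}" and g: "\<forall>j\<in>J. \<forall>x\<in>A. g j x \<in> A \<and> g j (f x) = f (g j x)"
    and cov: "\<forall>y\<in>A. \<exists>j\<in>J. g j y = y"
    and yz: "y \<in> A" "z \<in> A" "\<forall>j\<in>J. g j y = g j z"
  shows "\<exists>k. (f ^^ k) y = (f ^^ k) z"
proof (rule ccontr)
  assume apart: "\<not> (\<exists>k. (f ^^ k) y = (f ^^ k) z)"
  have ghom: "g j ((f ^^ n) x) = (f ^^ n) (g j x)" if "j \<in> J" "x \<in> A" for j x n
    using hom_funpow[OF _ closed that(2)] g that(1) by blast
  show False
  proof (cases "\<exists>c\<in>A. \<exists>p. (f ^^ Suc p) c = c")
    case True
    then obtain c p where c: "c \<in> A" "(f ^^ Suc p) c = c" by blast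
    define C where "C = range (\<lambda>i. (f ^^ i) c)"
    have C: "C \<noteq> {}" "C \<subseteq> A" unfolding C_def using funpow_in[OF c(1)] by auto
    have fC: "f ` C \<subseteq> C"
    proof
      fix d assume "d \<in> f ` C"
      then obtain i where "d = f ((f ^^ i) c)" unfolding C_def by blast
      then have "d = (f ^^ Suc i) c" by simp
      then show "d \<in> C" unfolding C_def by blast
    qed
    have period: "(f ^^ (Suc p * i)) c = c" for i
    proof (induction i)
      case (Suc i)
      have "(f ^^ (Suc p * Suc i)) c = (f ^^ (Suc p * i)) ((f ^^ Suc p) c)"
        by (metis funpow_funpow mult_Suc_right add.commute)
      then show ?case using Suc c(2) by simp
    qed simp
    have C_rot: "\<exists>i. d' = (f ^^ i) d" if d: "d \<in> C" "d' \<in> C" for d d'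
    proof -
      obtain i i' where i: "d = (f ^^ i) c" "d' = (f ^^ i') c" using d unfolding C_def by blast
      have "(f ^^ (i' + p * i)) d = (f ^^ (i' + Suc p * i)) c"
        unfolding i(1) funpow_funpow by (simp add: algebra_simps)
      also have "\<dots> = d'" using period i(2) by (metis funpow_funpow)
      finally show ?thesis by metis
    qed
    obtain t1 t2 where t: "(f ^^ t1) y \<in> C" "(f ^^ t2) z \<in> C"
      using reaches_subalgebra[OF C(1) fC] yz(1,2) C(2) by metis
    define N where "N = t2 + t1"
    have yN: "(f ^^ N) y \<in> C" using funpow_closed[OF fC t(1), of t2] funpow_funpow N_def by metis
    have zN: "(f ^^ N) z \<in> C"
      using funpow_closed[OF fC t(2), of t1] funpow_funpow N_def add.commute by metis
    obtain j where j: "j \<in> J" "g j ((f ^^ N) y) = (f ^^ N) y"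
      using cov yN C(2) by blast
    obtain i where i: "(f ^^ N) z = (f ^^ i) ((f ^^ N) y)" using C_rot yN zN by blast
    have "g j ((f ^^ N) z) = (f ^^ N) z"
      using i j ghom[OF j(1) funpow_in[OF yz(1)]] by simp
    moreover have "g j ((f ^^ N) y) = g j ((f ^^ N) z)"
      using ghom[OF j(1) yz(1)] ghom[OF j(1) yz(2)] yz(3) j(1) by simp
    ultimately show False using j(2) apart by metis
  next
    case False
    obtain m n where mn: "(f ^^ m) y = (f ^^ n) z" using connected yz by blast
    obtain j where j: "j \<in> J" using J by blast
    have "(f ^^ m) (g j y) = (f ^^ n) (g j y)"
      using ghom[OF j yz(1)] ghom[OF j yz(2)] yz(3) j mn by metis
    then have "m = n" using funpow_inj_if_acyclic[OF _ closed] g j yz(1) False by blast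
    then show False using apart mn by blast
  qed
qed

lemma eq_if_homs_agree:
  assumes J: "J \<noteq> {}" and g: "\<forall>j\<in>J. \<forall>x\<in>A. g j x \<in> A \<and> g j (f x) = f (g j x)"
    and cov: "\<forall>y\<in>A. \<exists>j\<in>J. g j y = y"
    and sib: "\<forall>u\<in>A. \<forall>v\<in>A. f u = f v \<and> u \<noteq> v \<longrightarrow> (\<exists>j\<in>J. g j u \<noteq> g j v)"
    and yz: "y \<in> A" "z \<in> A" "\<forall>j\<in>J. g j y = g j z"
  shows "y = z"
proof (rule ccontr)
  assume ne: "y \<noteq> z"
  define k where "k = (LEAST k. (f ^^ k) y = (f ^^ k) z)"
  have k: "(f ^^ k) y = (f ^^ k) z"
    unfolding k_def using meet_if_homs_agree[OF J g cov yz] by (meson LeastI_ex)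
  then obtain k' where k': "k = Suc k'" using ne by (cases k) auto
  have "(f ^^ k') y \<noteq> (f ^^ k') z"
    using k' not_less_Least[of k' "\<lambda>k. (f ^^ k) y = (f ^^ k) z"] unfolding k_def by simp
  moreover have "f ((f ^^ k') y) = f ((f ^^ k') z)" using k k' by simp
  ultimately obtain j where j: "j \<in> J" "g j ((f ^^ k') y) \<noteq> g j ((f ^^ k') z)"
    using sib funpow_in yz by meson
  have "g j ((f ^^ k') y) = (f ^^ k') (g j y)" "g j ((f ^^ k') z) = (f ^^ k') (g j z)"
    using hom_funpow[OF _ closed, of "g j"] g j(1) yz(1,2) by blast+
  then show False using j yz(3) by simp
qed

lemma in_V_of_retracts:
  fixes J :: "('a set \<times> nat) set"
  assumes J: "J \<noteq> {}" "\<forall>j\<in>J. retract A f (fst j) \<and> S_class (fst j) f"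
    and g: "\<forall>j\<in>J. \<forall>x\<in>A. g j x \<in> fst j \<and> g j (f x) = f (g j x)"
    and cov: "\<forall>y\<in>A. \<exists>j\<in>J. g j y = y"
    and sib: "\<forall>u\<in>A. \<forall>v\<in>A. f u = f v \<and> u \<noteq> v \<longrightarrow> (\<exists>j\<in>J. g j u \<noteq> g j v)"
  shows "has_S_retract_basis A f"
proof -
  have sub: "fst j \<subseteq> A" if "j \<in> J" for j
    using J(2) that unfolding retract_def by auto
  then have gA: "\<forall>j\<in>J. \<forall>x\<in>A. g j x \<in> A \<and> g j (f x) = f (g j x)" using g by blast
  have "in_V (fst ` J) f A f"
  proof (rule in_V_of_separating_homs[where g = g and k = "\<lambda>j x. x"])
    show "\<forall>y\<in>A. \<forall>z\<in>A. (\<forall>j\<in>J. g j y = g j z) \<longrightarrow> y = z"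
      using eq_if_homs_agree[OF J(1) gA cov sib] by blast
  qed (use J(1) sub closed nonempty g cov in auto)
  then show ?thesis
    unfolding has_S_retract_basis_def using J(2) retract_in_V_self[OF closed] by blast
qed

section \<open>Algebras without infinite backward chains\<close>

lemma exists_S2_retract_siblings:
  assumes K: "K = {}" and uv: "u \<in> A" "v \<in> A" "f u = f v"
  shows "\<exists>M. retract A f M \<and> S2 M f \<and> u \<in> M \<and> v \<in> M"
proof -
  have acyc: "\<forall>z\<in>A. \<forall>n. (f ^^ Suc n) z \<noteq> z" using cycle_in_Ainf[OF closed] K by blast
  have orbit_inj: "i = j" if "(f ^^ i) u = (f ^^ j) u" for i j
    using funpow_inj_if_acyclic[OF acyc closed uv(1) that] .
  define D where "D = range (\<lambda>k. (f ^^ Suc k) u)"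
  have D: "D \<subseteq> A" "f ` D \<subseteq> D" "D \<noteq> {}"
  proof -
    show "D \<subseteq> A" "D \<noteq> {}" unfolding D_def using funpow_in[OF uv(1)] by blast+
    have "f ((f ^^ Suc k) u) = (f ^^ Suc (Suc k)) u" for k by simp
    then show "f ` D \<subseteq> D" unfolding D_def by (auto simp del: funpow.simps)
  qed
  have reach: "\<forall>z\<in>A. \<exists>n. (f ^^ n) z \<in> D"
  proof
    fix z assume z: "z \<in> A"
    obtain m n where "(f ^^ m) z = (f ^^ n) u" using connected z uv by blast
    then have "(f ^^ Suc m) z = (f ^^ Suc n) u" by simp
    then show "\<exists>n. (f ^^ n) z \<in> D" unfolding D_def by (metis rangeI)
  qed
  have D_index: "\<exists>i. x = (f ^^ Suc i) u" if "x \<in> D" for x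
    using that unfolding D_def by blast
  have "u \<notin> D"
  proof
    assume "u \<in> D"
    then obtain i where "u = (f ^^ Suc i) u" using D_index by blast
    then have "(f ^^ Suc i) u = (f ^^ 0) u" by simp
    then show False using orbit_inj by blast
  qed
  have D_sib: "x = y" if xy: "x \<in> D" "y \<in> D" "f x = f y" for x y
  proof -
    obtain i j where ij: "x = (f ^^ Suc i) u" "y = (f ^^ Suc j) u" using D_index xy by blast
    then have "(f ^^ Suc (Suc i)) u = (f ^^ Suc (Suc j)) u" using xy(3) by simp
    then show ?thesis using orbit_inj ij by blast
  qed
  have D_not_sib_u: "f x \<noteq> f u" if x: "x \<in> D" for x
  proof
    assume "f x = f u"
    moreover obtain i where "x = (f ^^ Suc i) u" using D_index x by blast
    ultimately have "(f ^^ Suc (Suc i)) u = (f ^^ Suc 0) u" by simp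
    then show False using orbit_inj by blast
  qed
  have "\<exists>M. retract A f M \<and> D \<subseteq> M \<and> u \<in> M \<and> v \<in> M \<and> (\<forall>x\<in>M - D. \<forall>y\<in>M - D.
     f x = f y \<and> partial_iso (Pset M f x) (Pset M f y) f \<longrightarrow> x = y \<or> x \<in> {u, v} \<and> y \<in> {u, v})"
    by (rule exists_pruned_retract_siblings[OF closed D(1,2) reach _ _ uv(2,3) D(3)])
      (use acyc \<open>u \<notin> D\<close> uv(1) in auto)
  then obtain M where M: "retract A f M" "u \<in> M" "v \<in> M" and pruned: "\<forall>x\<in>M - D. \<forall>y\<in>M - D.
     f x = f y \<and> partial_iso (Pset M f x) (Pset M f y) f \<longrightarrow> x = y \<or> x \<in> {u, v} \<and> y \<in> {u, v}"
    by (elim exE conjE)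
  have MA: "M \<subseteq> A" "f ` M \<subseteq> M" using M(1) unfolding retract_def by blast+
  have "star_cond M f"
    by (rule star_cond_pruned_outside[OF _ _ uv(3) pruned]) (use D_sib D_not_sib_u in blast)+
  then have "U_star_c M f" using U_star_c_subset MA M(2) by blast
  moreover have "Ainf M f = {}" using Ainf_mono[OF MA(1)] K by blast
  ultimately show ?thesis unfolding S2_def using M by blast
qed

lemma has_S_retract_basis_if_no_Ainf:
  assumes "K = {}"
  shows "has_S_retract_basis A f"
proof -
  define Mf where "Mf u v = (SOME M. retract A f M \<and> S2 M f \<and> u \<in> M \<and> v \<in> M)" for u v
  have Mf: "retract A f (Mf u v) \<and> S2 (Mf u v) f \<and> u \<in> Mf u v \<and> v \<in> Mf u v"
    if "u \<in> A" "v \<in> A" "f u = f v" for u v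
    unfolding Mf_def using exists_S2_retract_siblings[OF assms that] by (rule someI_ex)
  define J where "J = {(Mf u v, 0::nat) | u v. u \<in> A \<and> v \<in> A \<and> f u = f v}"
  define g where "g j = canonical_retraction A f (fst j)" for j :: "'a set \<times> nat"
  have Jret: "\<forall>j\<in>J. retract A f (fst j) \<and> S_class (fst j) f"
  proof
    fix j assume "j \<in> J"
    then obtain u v where "j = (Mf u v, 0)" "u \<in> A" "v \<in> A" "f u = f v" unfolding J_def by blast
    then show "retract A f (fst j) \<and> S_class (fst j) f" using Mf unfolding S_class_def by simp
  qed
  have g_fix: "(Mf u v, 0) \<in> J \<and> g (Mf u v, 0) u = u \<and> g (Mf u v, 0) v = v"
    if uv: "u \<in> A" "v \<in> A" "f u = f v" for u v
  proof -
    have "retract A f (Mf u v)" "u \<in> Mf u v" "v \<in> Mf u v" using Mf[OF uv] by blast+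
    then have "g (Mf u v, 0) u = u" "g (Mf u v, 0) v = v"
      using canonical_retraction_fixes unfolding g_def by simp_all
    moreover have "(Mf u v, 0) \<in> J" using uv unfolding J_def by blast
    ultimately show ?thesis by blast
  qed
  show ?thesis
  proof (rule in_V_of_retracts[of J g])
    show "J \<noteq> {}" using nonempty g_fix by blast
    show "\<forall>j\<in>J. \<forall>x\<in>A. g j x \<in> fst j \<and> g j (f x) = f (g j x)"
    proof (intro ballI)
      fix j x assume "j \<in> J" "x \<in> A"
      then have "retraction A f (fst j) (g j)" using Jret canonical_retraction unfolding g_def by blast
      then show "g j x \<in> fst j \<and> g j (f x) = f (g j x)" using \<open>x \<in> A\<close> unfolding retraction_def by blast
    qed
    show "\<forall>y\<in>A. \<exists>j\<in>J. g j y = y" using g_fix by blast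
    show "\<forall>u\<in>A. \<forall>v\<in>A. f u = f v \<and> u \<noteq> v \<longrightarrow> (\<exists>j\<in>J. g j u \<noteq> g j v)"
      using g_fix by metis
  qed (rule Jret)
qed

section \<open>Branches hanging from a core\<close>

definition branch_data :: "'a set \<Rightarrow> 'a \<Rightarrow> 'a \<Rightarrow> 'a \<Rightarrow> bool" where
  "branch_data K0 a u v \<longleftrightarrow> inf_core A f K0 \<and> a \<in> A \<and> a \<notin> K \<and> f a \<in> K0 \<and>
     u \<in> Pset A f a \<and> v \<in> Pset A f a \<and> f u = f v"

lemma exists_branch_root:
  assumes Kne: "K \<noteq> {}" and y: "y \<in> A" "y \<notin> K"
  shows "\<exists>a. a \<in> A \<and> a \<notin> K \<and> f a \<in> K \<and> y \<in> Pset A f a"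
proof -
  have "f ` K \<subseteq> K" using f_K by blast
  then have "\<exists>t. (f ^^ t) y \<in> K" using reaches_subalgebra[OF Kne _ y(1) K_subset] by blast
  define n where "n = (LEAST t. (f ^^ t) y \<in> K)"
  have n: "(f ^^ n) y \<in> K" unfolding n_def using \<open>\<exists>t. (f ^^ t) y \<in> K\<close> by (rule LeastI_ex)
  have "n \<noteq> 0"
  proof
    assume "n = 0"
    then show False using n y(2) by simp
  qed
  then obtain m where m: "n = Suc m" using not0_implies_Suc by blast
  then have "(f ^^ m) y \<notin> K" using not_less_Least[of m "\<lambda>t. (f ^^ t) y \<in> K"] n_def by simp
  moreover have "f ((f ^^ m) y) \<in> K" using n m by simp
  moreover have "y \<in> Pset A f ((f ^^ m) y)" using y unfolding Pset_def by blast
  ultimately show ?thesis using funpow_in[OF y(1)] by blast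
qed

lemma retract_core_union_branch:
  assumes K0: "inf_core A f K0" and a: "a \<in> A" "a \<notin> K" "f a \<in> K0"
  shows "retract A f (K0 \<union> Pset A f a)"
    and "\<exists>h. retraction A f (K0 \<union> Pset A f a) h \<and> (\<forall>x\<in>A - Pset A f a. h x \<in> K0)"
proof -
  define P where "P = Pset A f a"
  note K0D = inf_coreD[OF K0]
  have PK0: "z \<notin> K0" if "z \<in> P" for z
    using Pset_disjoint_Ainf[OF closed a(2)] that K0D(1) unfolding P_def by blast
  have fP: "z = a \<or> f z \<in> P" if "z \<in> P" for z using Pset_step[OF closed] that P_def by blast
  have bP: "z \<in> P" if "z \<in> A" "f z \<in> P" for z using Pset_back that P_def by metis
  obtain h0 where h0: "h0 ` A \<subseteq> K0" "\<forall>x\<in>A. h0 (f x) = f (h0 x)" "\<forall>x\<in>K0. h0 x = x"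
    using K0D(2) unfolding retract_def by blast
  define h1 where "h1 x = (if x \<in> P then x else h0 x)" for x
  have h1_hom: "h1 (f x) = f (h1 x)" if x: "x \<in> A" for x
  proof (cases "x \<in> P")
    case True
    then consider "x = a" | "f x \<in> P" using fP by blast
    then show ?thesis
    proof cases
      case 1
      then have "f x \<notin> P" "h0 (f x) = f x" using PK0 a(3) h0(3) by auto
      then show ?thesis using True unfolding h1_def by simp
    next
      case 2
      then show ?thesis using True unfolding h1_def by simp
    qed
  next
    case False
    then have "f x \<notin> P" using bP x by blast
    then show ?thesis using False h0(2) x unfolding h1_def by simp
  qed
  have h1_out: "h1 x \<in> K0" if "x \<in> A - P" for x
    using that h0(1) unfolding h1_def by auto
  have "h1 ` A \<subseteq> K0 \<union> P"
  proof
    fix y assume "y \<in> h1 ` A"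
    then obtain x where "x \<in> A" "y = h1 x" by blast
    then show "y \<in> K0 \<union> P" using h1_out unfolding h1_def by (cases "x \<in> P") auto
  qed
  moreover have "\<forall>x\<in>K0 \<union> P. h1 x = x" using h0(3) unfolding h1_def by auto
  ultimately have ret: "retraction A f (K0 \<union> P) h1"
    unfolding retraction_def using h1_hom by blast
  then show "\<exists>h. retraction A f (K0 \<union> Pset A f a) h \<and> (\<forall>x\<in>A - Pset A f a. h x \<in> K0)"
    using h1_out unfolding P_def by blast
  have "f ` (K0 \<union> P) \<subseteq> K0 \<union> P" using fP a(3) K0D(4) by blast
  moreover have "a \<in> P" using Pset_root a(1) P_def by metis
  moreover have "K0 \<union> P \<subseteq> A" using K0D(5) unfolding P_def Pset_def by blast
  ultimately show "retract A f (K0 \<union> Pset A f a)"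
    unfolding retract_iff_retraction P_def[symmetric] using ret by blast
qed

lemma branch_subalgebra_structure:
  assumes K0: "inf_core A f K0" and a: "a \<in> A" "a \<notin> K" "f a \<in> K0"
    and M: "K0 \<subseteq> M" "M \<subseteq> K0 \<union> Pset A f a" "f ` M \<subseteq> M" "a \<in> M"
  shows "Ainf M f = K0" "Aprime M f = {a}" "M - Pset M f a = K0"
proof -
  define P where "P = Pset A f a"
  note K0D = inf_coreD[OF K0]
  have PK: "z \<notin> K" if "z \<in> P" for z
    using Pset_disjoint_Ainf[OF closed a(2)] that unfolding P_def by blast
  have PK0: "z \<notin> K0" if "z \<in> P" for z using PK that K0D(1) by blast
  have MA: "M \<subseteq> A" using M(2) K0D(5) unfolding Pset_def by blast
  show Ainf: "Ainf M f = K0"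
  proof
    show "Ainf M f \<subseteq> K0"
    proof
      fix x assume x: "x \<in> Ainf M f"
      then have "x \<in> M" "x \<in> K" using Ainf_subset[of M f] Ainf_mono[OF MA] by blast+
      then show "x \<in> K0" using M(2) PK unfolding P_def by blast
    qed
    show "K0 \<subseteq> Ainf M f" using K0D(7) Ainf_mono[OF M(1)] by blast
  qed
  have "x = a" if x: "x \<in> M" "x \<notin> K0" "f x \<in> K0" for x
  proof -
    have "x \<in> P" using x(1,2) M(2) unfolding P_def by blast
    moreover have "f x \<notin> P" using x(3) PK0 by blast
    ultimately show ?thesis using Pset_step[OF closed, of x a] unfolding P_def by blast
  qed
  moreover have "a \<notin> K0" using a(2) K0D(1) by blast
  ultimately show "Aprime M f = {a}"
    unfolding Aprime_def Ainf using M(4) a(3) by blast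
  have "Pset M f a \<subseteq> P" using Pset_mono[OF MA] unfolding P_def .
  then have "Pset M f a = M \<inter> P" unfolding P_def Pset_def by blast
  then show "M - Pset M f a = K0" using M(1,2) PK0 unfolding P_def by blast
qed

lemma star_cond_branch_subalgebra:
  assumes K0: "inf_core A f K0" and a: "a \<in> A" "a \<notin> K" "f a \<in> K0"
    and M: "K0 \<subseteq> M" "M \<subseteq> K0 \<union> Pset A f a" "f ` M \<subseteq> M" "a \<in> M"
    and pruned: "\<forall>x\<in>M - K0. \<forall>y\<in>M - K0.
       f x = f y \<and> partial_iso (Pset M f x) (Pset M f y) f \<longrightarrow> x = y \<or> x \<in> {u, v} \<and> y \<in> {u, v}"
  shows "star_cond M f"
proof (rule star_condI)
  fix S x0 assume S: "isomorphic_siblings M f S" and x0: "x0 \<in> S"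
  note K0D = inf_coreD[OF K0]
  note Ainf = branch_subalgebra_structure(1)[OF K0 a M]
  have SM: "S \<subseteq> M" using S unfolding isomorphic_siblings_def by blast
  have sib: "f x = f x0" if "x \<in> S" for x using S x0 that unfolding isomorphic_siblings_def by blast
  have iso: "partial_iso (Pset M f x) (Pset M f y) f" if "x \<in> S" "y \<in> S" for x y
    using S that unfolding isomorphic_siblings_def by blast
  show "card S \<le> 2"
  proof (cases "f x0 \<in> K0")
    case True
    have in_K0: "x \<in> K0" if x: "x \<in> S" "x \<noteq> a" for x
    proof (rule ccontr)
      assume "x \<notin> K0"
      then have "x \<in> Pset A f a" using M(2) SM x(1) by blast
      moreover have "f x \<in> K" using sib[OF x(1)] True K0D(1) by auto
      then have "f x \<notin> Pset A f a" using Pset_disjoint_Ainf[OF closed a(2)] by blast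
      ultimately show False using Pset_step[OF closed] x(2) by blast
    qed
    show ?thesis
    proof (cases "a \<in> S")
      case True
      have "x = a" if x: "x \<in> S" for x
      proof (rule ccontr)
        assume "x \<noteq> a"
        then have "x \<in> Ainf M f" using in_K0 x Ainf by blast
        then have "a \<in> Ainf M f" using Ainf_if_partial_iso_Pset[OF M(3) iso[OF x True]] by blast
        then show False using Ainf a(2) K0D(1) by blast
      qed
      then show ?thesis using card_le_2_if_subset_pair[of S a a] by blast
    next
      case False
      obtain \<alpha> \<beta> where "\<forall>x\<in>K0. f x = f x0 \<longrightarrow> x = \<alpha> \<or> x = \<beta>"
        using K0 True unfolding inf_core_def by blast
      then have "S \<subseteq> {\<alpha>, \<beta>}" using in_K0 sib False by blast
      then show ?thesis by (rule card_le_2_if_subset_pair)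
    qed
  next
    case False
    then have "S \<subseteq> M - K0" using SM sib K0D(4) by fastforce
    then have "x = y \<or> x \<in> {u, v} \<and> y \<in> {u, v}" if "x \<in> S" "y \<in> S" for x y
      using pruned iso[OF that] sib[OF that(1)] sib[OF that(2)] that by (metis subsetD)
    then show ?thesis by (intro card_le_2_if_pairwise[of S u v]) blast
  qed
qed

text \<open>The retract of S^(1) through a given pair of siblings on a branch: the branch is pruned
  against the core K0.\<close>

lemma exists_branch_retract:
  assumes "branch_data K0 a u v"
  shows "\<exists>M h. retract A f M \<and> S1 M f \<and> u \<in> M \<and> v \<in> M \<and> K0 \<subseteq> M \<and> Ainf M f = K0 \<and>
    retraction A f M h \<and> Ainf_preserving A f M h"
proof -
  have K0: "inf_core A f K0" and a: "a \<in> A" "a \<notin> K" "f a \<in> K0"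
    and uv: "u \<in> Pset A f a" "v \<in> Pset A f a" "f u = f v"
    using assms unfolding branch_data_def by blast+
  define P where "P = Pset A f a"
  define A1 where "A1 = K0 \<union> P"
  note K0D = inf_coreD[OF K0]
  have PK: "z \<notin> K" if "z \<in> P" for z
    using Pset_disjoint_Ainf[OF closed a(2)] that unfolding P_def by blast
  have PA: "P \<subseteq> A" unfolding P_def Pset_def by blast
  have ret1: "retract A f A1" unfolding A1_def P_def by (rule retract_core_union_branch[OF K0 a])
  obtain h1 where h1: "retraction A f A1 h1" "\<forall>x\<in>A - P. h1 x \<in> K0"
    using retract_core_union_branch(2)[OF K0 a] unfolding A1_def P_def by blast
  have fA1: "f ` A1 \<subseteq> A1" using ret1 unfolding retract_def by blast
  have reach: "\<forall>z\<in>A1. \<exists>n. (f ^^ n) z \<in> K0"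
  proof
    fix z assume z: "z \<in> A1"
    show "\<exists>n. (f ^^ n) z \<in> K0"
    proof (cases "z \<in> K0")
      case False
      then obtain n where "(f ^^ n) z = a" using z unfolding A1_def P_def Pset_def by blast
      then have "(f ^^ Suc n) z \<in> K0" using a(3) by simp
      then show ?thesis by blast
    qed (metis funpow_0)
  qed
  have acyc: "\<forall>z\<in>A1 - K0. \<forall>n. (f ^^ Suc n) z \<noteq> z"
  proof (intro ballI allI notI)
    fix z n assume z: "z \<in> A1 - K0" and "(f ^^ Suc n) z = z"
    moreover have "z \<in> P" using z unfolding A1_def by blast
    ultimately have "z \<in> K" using cycle_in_Ainf[OF closed] PA by blast
    then show False using PK \<open>z \<in> P\<close> by blast
  qed
  have u: "u \<in> A1 - K0" and v: "v \<in> A1" using uv PK K0D(1) unfolding A1_def P_def by blast+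
  have K0A1: "K0 \<subseteq> A1" unfolding A1_def by blast
  have "\<exists>M. retract A1 f M \<and> K0 \<subseteq> M \<and> u \<in> M \<and> v \<in> M \<and> (\<forall>x\<in>M - K0. \<forall>y\<in>M - K0.
     f x = f y \<and> partial_iso (Pset M f x) (Pset M f y) f \<longrightarrow> x = y \<or> x \<in> {u, v} \<and> y \<in> {u, v})"
    by (rule exists_pruned_retract_siblings[OF fA1 K0A1 K0D(4) reach acyc u v uv(3) K0D(6)])
  then obtain M where M: "retract A1 f M" "K0 \<subseteq> M" "u \<in> M" "v \<in> M" and pruned: "\<forall>x\<in>M - K0.
     \<forall>y\<in>M - K0. f x = f y \<and> partial_iso (Pset M f x) (Pset M f y) f \<longrightarrow> x = y \<or> x \<in> {u, v} \<and> y \<in> {u, v}"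
    by (elim exE conjE)
  obtain h2 where h2: "retraction A1 f M h2" and MA1: "M \<subseteq> A1" "f ` M \<subseteq> M"
    using M(1) unfolding retract_iff_retraction by blast
  have "a \<in> M"
  proof -
    obtain n where "(f ^^ n) u = a" using uv(1) unfolding Pset_def by blast
    then show ?thesis using funpow_closed[OF MA1(2) M(3)] by metis
  qed
  note Mstruct = M(2) MA1(1)[unfolded A1_def P_def] MA1(2) \<open>a \<in> M\<close>
  note Mshape = branch_subalgebra_structure[OF K0 a Mstruct]
  have "A1 \<subseteq> A" using ret1 unfolding retract_def by blast
  then have "U_star_c M f"
    using U_star_c_subset star_cond_branch_subalgebra[OF K0 a Mstruct pruned] MA1 M(3) by blast
  moreover have "S0 (M - Pset M f a) f" using K0D(3) Mshape(3) by simp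
  ultimately have "S1 M f" unfolding S1_def using Mshape(2) \<open>a \<in> M\<close> by blast
  moreover have "retract A f M" using retract_trans[OF ret1 M(1)] .
  moreover have "retraction A f M (h2 \<circ> h1)"
    unfolding retraction_def
  proof (intro conjI ballI)
    have "h1 ` A \<subseteq> A1" "h2 ` A1 \<subseteq> M" using h1(1) h2 unfolding retraction_def by blast+
    then show "(h2 \<circ> h1) ` A \<subseteq> M" by (auto simp: image_subset_iff)
    fix x
    show "x \<in> A \<Longrightarrow> (h2 \<circ> h1) (f x) = f ((h2 \<circ> h1) x)"
      using h1(1) h2 \<open>h1 ` A \<subseteq> A1\<close> unfolding retraction_def by auto
    show "x \<in> M \<Longrightarrow> (h2 \<circ> h1) x = x"
      using h1(1) h2 MA1(1) unfolding retraction_def by auto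
  qed
  moreover have "Ainf_preserving A f M (h2 \<circ> h1)"
    unfolding Ainf_preserving_def Mshape(1)
  proof (intro ballI impI)
    fix x assume x: "x \<in> A" "x \<notin> M \<and> f x \<in> K0"
    have "x \<notin> P"
    proof
      assume "x \<in> P"
      moreover have "x \<noteq> a" using x \<open>a \<in> M\<close> by blast
      moreover have "f x \<notin> P" using x PK K0D(1) by blast
      ultimately show False using Pset_step[OF closed, of x a] unfolding P_def by blast
    qed
    then have "h1 x \<in> K0" using h1(2) x(1) by blast
    moreover have "h2 y = y" if "y \<in> K0" for y using h2 M(2) that unfolding retraction_def by blast
    ultimately show "(h2 \<circ> h1) x \<in> K0" by simp
  qed
  ultimately show ?thesis using M(2,3,4) Mshape(1) by blast
qed

definition branch_retract :: "'a set \<Rightarrow> 'a \<Rightarrow> 'a \<Rightarrow> 'a \<Rightarrow> 'a set" where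
  "branch_retract K0 a u v = (SOME M. \<exists>h. retract A f M \<and> S1 M f \<and> u \<in> M \<and> v \<in> M \<and> K0 \<subseteq> M \<and>
     Ainf M f = K0 \<and> retraction A f M h \<and> Ainf_preserving A f M h)"

lemma branch_retract:
  assumes "branch_data K0 a u v"
  defines "M \<equiv> branch_retract K0 a u v"
  shows "retract A f M" "S1 M f" "u \<in> M" "v \<in> M" "K0 \<subseteq> M" "Ainf M f = K0"
    "Ainf_preserving A f M (canonical_retraction A f M)"
proof -
  have "\<exists>h. retract A f M \<and> S1 M f \<and> u \<in> M \<and> v \<in> M \<and> K0 \<subseteq> M \<and> Ainf M f = K0 \<and>
      retraction A f M h \<and> Ainf_preserving A f M h"
    unfolding M_def branch_retract_def using exists_branch_retract[OF assms(1)] by (rule someI_ex)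
  then obtain h where "retract A f M" "S1 M f" "u \<in> M" "v \<in> M" "K0 \<subseteq> M" "Ainf M f = K0"
    "retraction A f M h" "Ainf_preserving A f M h" by (elim exE conjE)
  then show "retract A f M" "S1 M f" "u \<in> M" "v \<in> M" "K0 \<subseteq> M" "Ainf M f = K0"
    "Ainf_preserving A f M (canonical_retraction A f M)"
    using canonical_retraction_Ainf_preserving by blast+
qed

lemma branch_retract_fixes:
  assumes "branch_data K0 a u v" "x \<in> branch_retract K0 a u v"
  shows "canonical_retraction A f (branch_retract K0 a u v) x = x"
  using canonical_retraction_fixes[OF branch_retract(1)[OF assms(1)] assms(2)] .

context
  fixes KC :: "'a set set"
  assumes Kne: "K \<noteq> {}" and cores: "\<forall>K0\<in>KC. inf_core A f K0" and cover: "\<forall>w\<in>K. \<exists>K0\<in>KC. w \<in> K0"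
begin

lemma core_fixes: "K0 \<in> KC \<Longrightarrow> x \<in> K0 \<Longrightarrow> canonical_retraction A f K0 x = x"
  using canonical_retraction_fixes[OF inf_coreD(2)[of A f K0]] cores by blast

lemma branch_retract_covers:
  assumes y: "y \<in> A" "y \<notin> K"
  shows "\<exists>K0\<in>KC. \<exists>a. branch_data K0 a y y \<and> y \<in> branch_retract K0 a y y"
proof -
  obtain a where a: "a \<in> A" "a \<notin> K" "f a \<in> K" "y \<in> Pset A f a"
    using exists_branch_root[OF Kne y] by blast
  obtain K0 where K0: "K0 \<in> KC" "f a \<in> K0" using cover a(3) by blast
  then have "branch_data K0 a y y" using cores a unfolding branch_data_def by blast
  then show ?thesis using K0(1) branch_retract(3) by blast
qed

lemma branch_retract_separates:
  assumes uv: "u \<in> A" "v \<in> A" "f u = f v" "u \<noteq> v" and notK: "u \<notin> K \<or> v \<notin> K"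
  shows "\<exists>K0\<in>KC. \<exists>a u' v'. branch_data K0 a u' v' \<and>
    canonical_retraction A f (branch_retract K0 a u' v') u \<noteq>
    canonical_retraction A f (branch_retract K0 a u' v') v"
proof -
  have mixed: "\<exists>K0\<in>KC. \<exists>a u' v'. branch_data K0 a u' v' \<and>
      canonical_retraction A f (branch_retract K0 a u' v') x \<noteq>
      canonical_retraction A f (branch_retract K0 a u' v') y"
    if xy: "x \<in> K" "y \<in> A" "y \<notin> K" "f x = f y" "x \<noteq> y" for x y
  proof -
    obtain K0 where K0: "K0 \<in> KC" "x \<in> K0" using cover xy(1) by blast
    then have "f y \<in> K0" using xy(4) inf_coreD(4)[of A f K0] cores by force
    then have bd: "branch_data K0 y y y" using cores K0(1) xy(2,3) Pset_root[of y A f]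
      unfolding branch_data_def by blast
    then have "x \<in> branch_retract K0 y y y" "y \<in> branch_retract K0 y y y"
      using branch_retract(3,5) K0(2) by blast+
    then show ?thesis using bd K0(1) branch_retract_fixes[OF bd] xy(5) by metis
  qed
  show ?thesis
  proof (cases "u \<in> K \<or> v \<in> K")
    case True
    then show ?thesis using mixed uv notK by metis
  next
    case False
    then have uK: "u \<notin> K" "v \<notin> K" by blast+
    show ?thesis
    proof (cases "f u \<in> K")
      case True
      obtain K0 where K0: "K0 \<in> KC" "f u \<in> K0" using cover True by blast
      have bd: "branch_data K0 u u u" using cores K0 uv(1) uK(1) Pset_root[of u A f]
        unfolding branch_data_def by blast
      define M where "M = branch_retract K0 u u u"
      note M = branch_retract[OF bd, folded M_def]
      have K0K: "K0 \<subseteq> K" using cores K0(1) inf_coreD(1) by blast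
      have "u \<in> Aprime M f" unfolding Aprime_def M(6) using M(3) K0(2) uK(1) K0K by blast
      moreover obtain a' where a': "Aprime M f = {a'}" using M(2) unfolding S1_def by blast
      moreover have "v \<in> Aprime M f" if "v \<in> M"
        unfolding Aprime_def M(6) using that K0(2) uv(3) uK(2) K0K by auto
      ultimately have "v \<notin> M" using uv(4) by auto
      then have "canonical_retraction A f M v \<in> K0"
        using M(6,7) uv K0(2) unfolding Ainf_preserving_def by auto
      moreover have "canonical_retraction A f M u = u" using branch_retract_fixes[OF bd] M(3) M_def by blast
      ultimately have "canonical_retraction A f M u \<noteq> canonical_retraction A f M v"
        using uK(1) K0K by auto
      then show ?thesis using bd K0(1) unfolding M_def by blast
    next
      case False
      obtain a where a: "a \<in> A" "a \<notin> K" "f a \<in> K" "f u \<in> Pset A f a"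
        using exists_branch_root[OF Kne f_in[OF uv(1)] False] by blast
      obtain K0 where K0: "K0 \<in> KC" "f a \<in> K0" using cover a(3) by blast
      have "u \<in> Pset A f a" "v \<in> Pset A f a" using Pset_back uv a(4) by metis+
      then have bd: "branch_data K0 a u v" using cores K0 a uv(3) unfolding branch_data_def by blast
      then show ?thesis
        using K0(1) branch_retract(3,4) branch_retract_fixes[OF bd] uv(4) by metis
    qed
  qed
qed

text \<open>The indices of J' are shifted away from 0, the index of the canonical retractions.\<close>

lemma has_S_retract_basis_from_cores:
  fixes J' :: "('a set \<times> nat) set"
  assumes J': "\<forall>j\<in>J'. retract A f (fst j) \<and> S_class (fst j) f"
    and g': "\<forall>j\<in>J'. \<forall>x\<in>A. g' j x \<in> fst j \<and> g' j (f x) = f (g' j x)"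
    and sep: "\<forall>u\<in>K. \<forall>v\<in>K. f u = f v \<and> u \<noteq> v \<longrightarrow>
      (\<exists>K0\<in>KC. u \<in> K0 \<and> v \<in> K0) \<or> (\<exists>j\<in>J'. g' j u \<noteq> g' j v)"
  shows "has_S_retract_basis A f"
proof -
  define JK where "JK = (\<lambda>K0. (K0, 0::nat)) ` KC"
  define JT where "JT = {(branch_retract K0 a u v, 0::nat) | K0 a u v. K0 \<in> KC \<and> branch_data K0 a u v}"
  define JJ where "JJ = (\<lambda>j. (fst j, Suc (snd j))) ` J'"
  define G where "G j = (if snd j = 0 then canonical_retraction A f (fst j) else g' (fst j, snd j - 1))"
    for j :: "'a set \<times> nat"
  have JK_ret: "retract A f (fst j) \<and> S_class (fst j) f" if j: "j \<in> JK" for j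
  proof -
    obtain K0 where "j = (K0, 0)" "K0 \<in> KC" using j unfolding JK_def by blast
    then show ?thesis using cores inf_coreD(2,3)[of A f K0] unfolding S_class_def by simp
  qed
  have JT_ret: "retract A f (fst j) \<and> S_class (fst j) f" if j: "j \<in> JT" for j
  proof -
    obtain K0 a u v where "j = (branch_retract K0 a u v, 0)" "branch_data K0 a u v"
      using j unfolding JT_def by blast
    then show ?thesis using branch_retract(1,2) unfolding S_class_def by simp
  qed
  have JJ: "j \<in> JJ \<Longrightarrow> snd j \<noteq> 0 \<and> (fst j, snd j - 1) \<in> J'" for j unfolding JJ_def by auto
  have Jret: "\<forall>j\<in>JK \<union> JT \<union> JJ. retract A f (fst j) \<and> S_class (fst j) f"
    using JK_ret JT_ret JJ J' by fastforce
  show ?thesis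
  proof (rule in_V_of_retracts[of "JK \<union> JT \<union> JJ" G])
    show "JK \<union> JT \<union> JJ \<noteq> {}" using Kne cover unfolding JK_def by blast
    show "\<forall>j\<in>JK \<union> JT \<union> JJ. \<forall>x\<in>A. G j x \<in> fst j \<and> G j (f x) = f (G j x)"
    proof (intro ballI)
      fix j x assume j: "j \<in> JK \<union> JT \<union> JJ" and x: "x \<in> A"
      show "G j x \<in> fst j \<and> G j (f x) = f (G j x)"
      proof (cases "j \<in> JJ")
        case True
        then show ?thesis using JJ g' x unfolding G_def by fastforce
      next
        case False
        then have jKT: "j \<in> JK \<union> JT" using j by blast
        then have "retract A f (fst j)" using JK_ret JT_ret by blast
        moreover have "snd j = 0" using jKT unfolding JK_def JT_def by auto
        ultimately have "retraction A f (fst j) (G j)" using canonical_retraction unfolding G_def by simp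
        then show ?thesis using x unfolding retraction_def by blast
      qed
    qed
    show "\<forall>y\<in>A. \<exists>j\<in>JK \<union> JT \<union> JJ. G j y = y"
    proof
      fix y assume y: "y \<in> A"
      show "\<exists>j\<in>JK \<union> JT \<union> JJ. G j y = y"
      proof (cases "y \<in> K")
        case True
        then obtain K0 where "K0 \<in> KC" "y \<in> K0" using cover by blast
        then show ?thesis using core_fixes unfolding JK_def G_def by force
      next
        case False
        then obtain K0 a where "K0 \<in> KC" "branch_data K0 a y y" "y \<in> branch_retract K0 a y y"
          using branch_retract_covers y by blast
        then show ?thesis using branch_retract_fixes unfolding JT_def G_def by force
      qed
    qed
    show "\<forall>u\<in>A. \<forall>v\<in>A. f u = f v \<and> u \<noteq> v \<longrightarrow> (\<exists>j\<in>JK \<union> JT \<union> JJ. G j u \<noteq> G j v)"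
    proof (intro ballI impI)
      fix u v assume u: "u \<in> A" and v: "v \<in> A" and uv: "f u = f v \<and> u \<noteq> v"
      show "\<exists>j\<in>JK \<union> JT \<union> JJ. G j u \<noteq> G j v"
      proof (cases "u \<in> K \<and> v \<in> K")
        case True
        then consider K0 where "K0 \<in> KC" "u \<in> K0" "v \<in> K0" | j where "j \<in> J'" "g' j u \<noteq> g' j v"
          using sep uv by blast
        then show ?thesis
        proof cases
          case 1
          then have "G (K0, 0) u = u" "G (K0, 0) v = v"
            using core_fixes unfolding G_def by auto
          then show ?thesis using 1 uv unfolding JK_def by force
        next
          case 2
          then have "(fst j, Suc (snd j)) \<in> JJ" "G (fst j, Suc (snd j)) = g' j"
            unfolding JJ_def G_def by auto
          then show ?thesis using 2 by force
        qed
      next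
        case False
        then obtain K0 a u' v' where "K0 \<in> KC" "branch_data K0 a u' v'"
          "canonical_retraction A f (branch_retract K0 a u' v') u \<noteq>
           canonical_retraction A f (branch_retract K0 a u' v') v"
          using branch_retract_separates u v uv by blast
        then show ?thesis unfolding JT_def G_def by force
      qed
    qed
  qed (use Jret in blast)
qed

end

definition back_chain :: "'a \<Rightarrow> nat \<Rightarrow> 'a" where
  "back_chain x = (SOME \<sigma>. \<sigma> 0 = x \<and> (\<forall>n. \<sigma> n \<in> A \<and> f (\<sigma> (Suc n)) = \<sigma> n))"

lemma back_chain:
  assumes "x \<in> K"
  shows "back_chain x 0 = x" "back_chain x n \<in> A" "f (back_chain x (Suc n)) = back_chain x n"
proof -
  have "\<exists>\<sigma>. \<sigma> 0 = x \<and> (\<forall>n. \<sigma> n \<in> A \<and> f (\<sigma> (Suc n)) = \<sigma> n)"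
    using assms unfolding Ainf_def by blast
  then have "back_chain x 0 = x \<and> (\<forall>n. back_chain x n \<in> A \<and> f (back_chain x (Suc n)) = back_chain x n)"
    unfolding back_chain_def by (rule someI_ex)
  then show "back_chain x 0 = x" "back_chain x n \<in> A" "f (back_chain x (Suc n)) = back_chain x n"
    by auto
qed

lemma funpow_back_chain:
  assumes "x \<in> K"
  shows "(f ^^ m) (back_chain x (m + j)) = back_chain x j"
proof (induction m)
  case (Suc m)
  have "(f ^^ Suc m) (back_chain x (Suc m + j)) = (f ^^ m) (f (back_chain x (Suc (m + j))))"
    by (simp add: funpow_swap1)
  then show ?case using Suc back_chain(3)[OF assms] by simp
qed simp

end

locale acyclic_connected_unary = connected_unary +
  assumes acyclic: "\<forall>z\<in>A. \<forall>n. (f ^^ Suc n) z \<noteq> z"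
begin

section \<open>Acyclic algebras with infinite backward chains\<close>

definition line :: "'a \<Rightarrow> int \<Rightarrow> 'a" where
  "line w k = (if 0 \<le> k then (f ^^ nat k) w else back_chain w (nat (- k)))"

lemma line_in: "w \<in> K \<Longrightarrow> line w k \<in> A"
  unfolding line_def using funpow_in back_chain(2) K_subset by auto

lemma line_0: "line w 0 = w"
  by (simp add: line_def)

lemma f_line:
  assumes w: "w \<in> K"
  shows "f (line w k) = line w (k + 1)"
proof (cases "0 \<le> k")
  case True
  then have "nat (k + 1) = Suc (nat k)" by simp
  then show ?thesis using True by (simp add: line_def)
next
  case False
  show ?thesis
  proof (cases "k = -1")
    case True
    then show ?thesis using back_chain[OF w] by (simp add: line_def)
  next
    case False2: False
    then have "nat (- k) = Suc (nat (- (k + 1)))" "\<not> 0 \<le> k + 1" using False by auto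
    then show ?thesis using False back_chain(3)[OF w] by (simp add: line_def)
  qed
qed

lemma funpow_line: "w \<in> K \<Longrightarrow> (f ^^ m) (line w k) = line w (k + int m)"
  by (induction m) (simp_all add: f_line algebra_simps)

lemma inj_line:
  assumes w: "w \<in> K"
  shows "inj (line w)"
proof (rule injI)
  fix i j assume e: "line w i = line w j"
  have False if ab: "a < b" "line w a = line w b" for a b
  proof -
    obtain m where m: "b = a + int (Suc m)" using ab(1) zless_iff_Suc_zadd by blast
    have "(f ^^ Suc m) (line w a) = line w a" using funpow_line[OF w, of "Suc m" a] m ab(2) by simp
    then show False using acyclic line_in[OF w] by blast
  qed
  then show "i = j" using e by (cases i j rule: linorder_cases) (blast, simp, metis)
qed

lemma inj_back_chain:
  assumes w: "w \<in> K"
  shows "inj (back_chain w)"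
proof (rule injI)
  fix i j assume e: "back_chain w i = back_chain w j"
  have False if ab: "a < b" "back_chain w a = back_chain w b" for a b
  proof -
    obtain m where m: "b = Suc (a + m)" using ab(1) less_imp_Suc_add by blast
    then have "(f ^^ Suc m) (back_chain w b) = back_chain w a"
      using funpow_back_chain[OF w, of "Suc m" a] by (simp add: add.commute)
    then have "(f ^^ Suc m) (back_chain w b) = back_chain w b" using ab(2) by simp
    then show False using acyclic back_chain(2)[OF w] by blast
  qed
  then show "i = j" using e by (cases i j rule: linorder_cases) (blast, simp, metis)
qed

lemma inf_core_line:
  assumes w: "w \<in> K"
  shows "inf_core A f (range (line w))"
proof -
  have inj: "inj (line w)" using inj_line[OF w] .
  have iv: "inv (line w) (line w k) = k" for k using inj by simp
  define \<beta> where "\<beta> y = line w (inv (line w) y - 1)" for y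
  have f_range: "f ` range (line w) \<subseteq> range (line w)" using f_line[OF w] by auto
  show ?thesis
  proof (rule inf_coreI)
    show "range (line w) \<subseteq> A" using line_in[OF w] by blast
    show "\<forall>y\<in>range (line w). \<beta> y \<in> range (line w) \<and> f (\<beta> y) = y"
      using f_line[OF w] iv unfolding \<beta>_def by auto
    show "\<forall>q\<in>range (line w). \<exists>a b. \<forall>x\<in>range (line w). f x = q \<longrightarrow> x = a \<or> x = b"
    proof
      fix q assume "q \<in> range (line w)"
      then obtain k where q: "q = line w k" by blast
      have "x = line w (k - 1)" if x: "x \<in> range (line w)" "f x = q" for x
      proof -
        obtain j where j: "x = line w j" using x(1) by blast
        then have "line w (j + 1) = line w k" using f_line[OF w] q x(2) by simp
        then have "j = k - 1" using inj by (simp add: inj_eq)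
        then show ?thesis using j by simp
      qed
      then show "\<exists>a b. \<forall>x\<in>range (line w). f x = q \<longrightarrow> x = a \<or> x = b" by blast
    qed
    have "alg_iso (range (line w)) f Z_car Z_fun"
    proof (rule alg_iso_inv)
      show "bij_betw (line w) Z_car (range (line w))"
        using inj unfolding Z_car_def by (simp add: bij_betw_def)
      show "\<forall>x\<in>Z_car. line w (Z_fun x) = f (line w x)" using f_line[OF w] by (simp add: Z_fun_def)
    qed (simp add: Z_car_def)
    then show "S0 (range (line w)) f" unfolding S0_def mono_alg_def using f_range by auto
  qed (use f_range in auto)
qed

subsection \<open>The core through two siblings\<close>

definition E_core :: "'a \<Rightarrow> 'a \<Rightarrow> 'a set" where
  "E_core u v = range (line u) \<union> range (back_chain v)"

context
  fixes u v
  assumes uv: "u \<in> K" "v \<in> K" "f u = f v" "u \<noteq> v"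
begin

lemma f_v: "f v = line u 1"
  using uv(3) f_line[OF uv(1), of 0] line_0 by simp

lemma line_neq_back_chain: "line u k \<noteq> back_chain v j"
proof
  assume e: "line u k = back_chain v j"
  have "v = (f ^^ j) (back_chain v j)"
    using funpow_back_chain[OF uv(2), of j 0] back_chain(1)[OF uv(2)] by simp
  also have "\<dots> = line u (k + int j)" using e[symmetric] funpow_line[OF uv(1)] by simp
  finally have v: "v = line u (k + int j)" .
  then have "line u (k + int j + 1) = line u 1" using f_v f_line[OF uv(1)] by simp
  then have "k + int j = 0" using inj_line[OF uv(1)] by (simp add: inj_eq)
  then show False using v line_0 uv(4) by simp
qed

lemma f_back_chain_in_E_core: "f (back_chain v j) \<in> E_core u v"
proof (cases j)
  case 0
  then show ?thesis using f_v back_chain(1)[OF uv(2)] by (simp add: E_core_def)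
next
  case (Suc i)
  then show ?thesis using back_chain(3)[OF uv(2)] by (simp add: E_core_def)
qed

lemma E_core_preimages:
  assumes "q \<in> E_core u v"
  shows "\<exists>a b. \<forall>x\<in>E_core u v. f x = q \<longrightarrow> x = a \<or> x = b"
proof -
  have line_pre: "x = line u (k - 1) \<or> x = v" if x: "x \<in> E_core u v" "f x = line u k" for x k
  proof -
    consider j where "x = line u j" | j where "x = back_chain v j" using x(1) unfolding E_core_def by blast
    then show ?thesis
    proof cases
      case (1 j)
      then have "line u (j + 1) = line u k" using x(2) f_line[OF uv(1)] by simp
      then show ?thesis using 1 inj_line[OF uv(1)] by (simp add: inj_eq)
    next
      case (2 j)
      show ?thesis
      proof (cases j)
        case (Suc i)
        then have "back_chain v i = line u k" using 2 x(2) back_chain(3)[OF uv(2)] by simp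
        then show ?thesis using line_neq_back_chain by metis
      qed (use 2 back_chain(1)[OF uv(2)] in simp)
    qed
  qed
  have chain_pre: "x = back_chain v (Suc i)" if x: "x \<in> E_core u v" "f x = back_chain v i" for x i
  proof -
    consider j where "x = line u j" | j where "x = back_chain v j" using x(1) unfolding E_core_def by blast
    then show ?thesis
    proof cases
      case (1 j)
      then have "line u (j + 1) = back_chain v i" using x(2) f_line[OF uv(1)] by simp
      then show ?thesis using line_neq_back_chain by metis
    next
      case (2 j)
      show ?thesis
      proof (cases j)
        case 0
        then have "line u 1 = back_chain v i" using 2 x(2) f_v back_chain(1)[OF uv(2)] by simp
        then show ?thesis using line_neq_back_chain by metis
      next
        case (Suc j')
        then have "back_chain v j' = back_chain v i" using 2 x(2) back_chain(3)[OF uv(2)] by simp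
        then show ?thesis using 2 Suc inj_back_chain[OF uv(2)] by (simp add: inj_eq)
      qed
    qed
  qed
  from assms consider k where "q = line u k" | i where "q = back_chain v i" unfolding E_core_def by blast
  then show ?thesis using line_pre chain_pre by cases blast+
qed

lemma E_core_iso_E: "alg_iso (E_core u v) f E_car E_fun"
proof (rule alg_iso_inv)
  define \<psi> where "\<psi> x = (case x of Inl k \<Rightarrow> line u (k + 1) | Inr k \<Rightarrow> back_chain v (k - 1))" for x
  have injl: "inj (line u)" and injc: "inj (back_chain v)"
    using inj_line[OF uv(1)] inj_back_chain[OF uv(2)] .
  show "bij_betw \<psi> E_car (E_core u v)"
    unfolding bij_betw_def
  proof
    show "inj_on \<psi> E_car"
    proof (rule inj_onI)
      fix x y assume xy: "x \<in> E_car" "y \<in> E_car" "\<psi> x = \<psi> y"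
      show "x = y"
      proof (cases x; cases y)
        fix a b assume "x = Inr a" "y = Inr b"
        then have "a \<ge> 1" "b \<ge> 1" using xy by (auto simp: E_car_def)
        then show ?thesis using xy \<open>x = Inr a\<close> \<open>y = Inr b\<close> injc by (simp add: \<psi>_def inj_eq)
      qed (use xy injl line_neq_back_chain line_neq_back_chain[symmetric] in \<open>auto simp: \<psi>_def inj_eq\<close>)
    qed
    show "\<psi> ` E_car = E_core u v"
    proof
      show "\<psi> ` E_car \<subseteq> E_core u v" unfolding E_core_def \<psi>_def E_car_def by auto
      show "E_core u v \<subseteq> \<psi> ` E_car"
      proof
        fix y assume "y \<in> E_core u v"
        then consider k where "y = line u k" | j where "y = back_chain v j"
          unfolding E_core_def by blast
        then show "y \<in> \<psi> ` E_car"
        proof cases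
          case 1
          then have "y = \<psi> (Inl (k - 1))" by (simp add: \<psi>_def)
          then show ?thesis unfolding E_car_def by blast
        next
          case 2
          then have "y = \<psi> (Inr (Suc j))" by (simp add: \<psi>_def)
          then show ?thesis unfolding E_car_def by force
        qed
      qed
    qed
  qed
  show "\<forall>x\<in>E_car. \<psi> (E_fun x) = f (\<psi> x)"
  proof
    fix x assume x: "x \<in> E_car"
    show "\<psi> (E_fun x) = f (\<psi> x)"
    proof (cases x)
      case (Inl k)
      then show ?thesis using f_line[OF uv(1)] by (simp add: \<psi>_def E_fun_def add.assoc)
    next
      case (Inr k)
      then have k: "k \<ge> 1" using x by (auto simp: E_car_def)
      show ?thesis
      proof (cases "k > 1")
        case True
        then have "k - 1 = Suc (k - 1 - 1)" by simp
        then show ?thesis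
          using Inr True back_chain(3)[OF uv(2), of "k - 1 - 1"] by (simp add: \<psi>_def E_fun_def)
      next
        case False
        then have "k = 1" using k by simp
        then show ?thesis using Inr f_v back_chain(1)[OF uv(2)] by (simp add: \<psi>_def E_fun_def)
      qed
    qed
  qed
  show "E_fun ` E_car \<subseteq> E_car" unfolding E_car_def E_fun_def by auto
qed

lemma inf_core_E_core: "inf_core A f (E_core u v)"
proof -
  define \<beta> where "\<beta> y = (if y \<in> range (line u) then line u (inv (line u) y - 1)
    else back_chain v (Suc (inv (back_chain v) y)))" for y
  have f_E: "f ` E_core u v \<subseteq> E_core u v"
    using f_line[OF uv(1)] f_back_chain_in_E_core unfolding E_core_def by auto
  show ?thesis
  proof (rule inf_coreI)
    show "E_core u v \<subseteq> A" using line_in[OF uv(1)] back_chain(2)[OF uv(2)] by (auto simp: E_core_def)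
    show "E_core u v \<noteq> {}" by (simp add: E_core_def)
    show "\<forall>y\<in>E_core u v. \<beta> y \<in> E_core u v \<and> f (\<beta> y) = y"
      using inj_line[OF uv(1)] inj_back_chain[OF uv(2)] f_line[OF uv(1)] back_chain(3)[OF uv(2)]
      unfolding \<beta>_def E_core_def by auto
    show "S0 (E_core u v) f" unfolding S0_def mono_alg_def using E_core_iso_E f_E by (auto simp: E_core_def)
  qed (use f_E E_core_preimages in auto)
qed

lemma siblings_in_E_core: "u \<in> E_core u v" "v \<in> E_core u v"
proof -
  have "u = line u 0" "v = back_chain v 0" using line_0 back_chain(1)[OF uv(2)] by simp_all
  then show "u \<in> E_core u v" "v \<in> E_core u v" unfolding E_core_def by (metis UnI1 rangeI, metis UnI2 rangeI)
qed
end

lemma has_S_retract_basis_acyclic: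
  assumes Kne: "K \<noteq> {}"
  shows "has_S_retract_basis A f"
proof -
  define KC where "KC = {range (line w) | w. w \<in> K} \<union>
    {E_core u v | u v. u \<in> K \<and> v \<in> K \<and> f u = f v \<and> u \<noteq> v}"
  have cores: "\<forall>K0\<in>KC. inf_core A f K0"
  proof
    fix K0 assume "K0 \<in> KC"
    then consider w where "w \<in> K" "K0 = range (line w)"
      | u v where "u \<in> K" "v \<in> K" "f u = f v" "u \<noteq> v" "K0 = E_core u v"
      unfolding KC_def by blast
    then show "inf_core A f K0" using inf_core_line inf_core_E_core by cases simp_all
  qed
  have "w \<in> range (line w)" for w using line_0 by (metis rangeI)
  then have cover: "\<forall>w\<in>K. \<exists>K0\<in>KC. w \<in> K0" unfolding KC_def by blast
  have "\<exists>K0\<in>KC. u \<in> K0 \<and> v \<in> K0" if "u \<in> K" "v \<in> K" "f u = f v" "u \<noteq> v" for u v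
  proof -
    have "E_core u v \<in> KC" using that unfolding KC_def by blast
    then show ?thesis using siblings_in_E_core[OF that] by blast
  qed
  then show ?thesis
    by (intro has_S_retract_basis_from_cores[OF Kne cores cover, where J' = "{}"]) auto
qed

end

locale cyclic_connected_unary = connected_unary +
  fixes c0 :: 'a and p0 :: nat
  assumes c0: "c0 \<in> A" "(f ^^ Suc p0) c0 = c0"
begin

definition cycle :: "'a set" where "cycle = {x \<in> A. \<exists>q. (f ^^ Suc q) x = x}"
definition period :: nat where "period = Suc (LEAST q. (f ^^ Suc q) c0 = c0)"

lemma period_pos: "period \<ge> 1" by (simp add: period_def)
lemma funpow_period_c0: "(f ^^ period) c0 = c0" unfolding period_def using c0(2) by (meson LeastI)
lemma period_le: "(f ^^ Suc q) c0 = c0 \<Longrightarrow> period \<le> Suc q" unfolding period_def by (simp add: Least_le)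

lemma cycle_subset: "cycle \<subseteq> A" by (auto simp: cycle_def)
lemma c0_in_cycle: "c0 \<in> cycle" using c0 by (auto simp: cycle_def)
lemma f_cycle: "f ` cycle \<subseteq> cycle"
proof
  fix y assume "y \<in> f ` cycle"
  then obtain x q where x: "y = f x" "x \<in> A" "(f ^^ Suc q) x = x" unfolding cycle_def by blast
  have "(f ^^ Suc q) (f x) = f x" using x(3) by (metis funpow_swap1)
  then show "y \<in> cycle" using x f_in unfolding cycle_def by blast
qed
lemma cycle_subset_K: "cycle \<subseteq> K" using cycle_in_Ainf[OF closed] unfolding cycle_def by blast

lemma funpow_mult_cycle: "(f ^^ Suc q) c = c \<Longrightarrow> (f ^^ (Suc q * r)) c = c"
proof (induction r)
  case (Suc r)
  have "(f ^^ (Suc q * Suc r)) c = (f ^^ (Suc q * r)) ((f ^^ Suc q) c)"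
    by (metis funpow_funpow mult_Suc_right add.commute)
  then show ?case using Suc by simp
qed simp

lemma cyclic_points_related:
  assumes "c \<in> A" "c' \<in> A" "(f ^^ Suc p) c = c" "(f ^^ Suc q) c' = c'"
  shows "\<exists>i. c' = (f ^^ i) c"
proof -
  obtain m n where mn: "(f ^^ m) c = (f ^^ n) c'" using connected assms(1,2) by blast
  have "c' = (f ^^ (Suc q * n)) c'" using funpow_mult_cycle[OF assms(4)] by simp
  also have "\<dots> = (f ^^ (q * n)) ((f ^^ n) c')" by (simp add: funpow_funpow add.commute)
  also have "\<dots> = (f ^^ (q * n)) ((f ^^ m) c)" using mn by simp
  also have "\<dots> = (f ^^ (q * n + m)) c" by (simp add: funpow_funpow)
  finally show ?thesis by blast
qed

lemma cycle_funpow_rel: assumes "c \<in> cycle" "c' \<in> cycle" shows "\<exists>i. c' = (f ^^ i) c"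
  using cyclic_points_related assms unfolding cycle_def by blast

lemma funpow_period_mult: assumes "c \<in> cycle" shows "(f ^^ (period * q + i)) c = (f ^^ i) c"
proof -
  obtain r where r: "c = (f ^^ r) c0" using cycle_funpow_rel[OF c0_in_cycle assms] by blast
  have "(f ^^ (period * q)) c0 = c0" using funpow_period_c0 period_pos funpow_mult_cycle[of "period - 1" c0 q] by simp
  then have "(f ^^ (period * q)) c = c" using r by (metis funpow_funpow add.commute)
  then show ?thesis by (metis funpow_funpow add.commute)
qed

lemma funpow_period: "c \<in> cycle \<Longrightarrow> (f ^^ period) c = c"
  using funpow_period_mult[of c 1 0] by simp

lemma period_le_cycle: assumes "c \<in> cycle" "0 < m" "(f ^^ m) c = c" shows "period \<le> m"
proof -
  obtain s where s: "c0 = (f ^^ s) c" using cycle_funpow_rel[OF assms(1) c0_in_cycle] by blast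
  have "(f ^^ m) c0 = c0" using s assms(3) by (metis funpow_funpow add.commute)
  moreover obtain q where "m = Suc q" using assms(2) by (cases m) auto
  ultimately show ?thesis using period_le by simp
qed

lemma cycle_funpow_inj: assumes "c \<in> cycle" "i < period" "j < period" "(f ^^ i) c = (f ^^ j) c" shows "i = j"
proof (rule ccontr)
  assume ne: "i \<noteq> j"
  have gen: False if "a < b" "b < period" "(f ^^ a) c = (f ^^ b) c" for a b
  proof -
    have e: "(f ^^ Suc (b - a - 1)) ((f ^^ a) c) = (f ^^ a) c" using funpow_cycle_of_eq[OF that(3,1)] .
    have "(f ^^ a) c \<in> cycle" using funpow_closed[OF f_cycle assms(1)] .
    then have "period \<le> Suc (b - a - 1)" using period_le_cycle e by blast
    then show False using that by simp
  qed
  show False using ne gen[of i j] gen[of j i] assms by (metis linorder_neqE_nat)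
qed

lemma cycle_eq_image: assumes "c \<in> cycle" shows "cycle = (\<lambda>i. (f ^^ i) c) ` {..<period}"
proof
  show "(\<lambda>i. (f ^^ i) c) ` {..<period} \<subseteq> cycle" using funpow_closed[OF f_cycle assms] by blast
  show "cycle \<subseteq> (\<lambda>i. (f ^^ i) c) ` {..<period}"
  proof
    fix x assume "x \<in> cycle"
    then obtain r where r: "x = (f ^^ r) c" using cycle_funpow_rel[OF assms] by blast
    have "r = period * (r div period) + r mod period" by simp
    then have "x = (f ^^ (r mod period)) c" using r funpow_period_mult[OF assms] by metis
    moreover have "r mod period < period" using period_pos by simp
    ultimately show "x \<in> (\<lambda>i. (f ^^ i) c) ` {..<period}" by blast
  qed
qed

definition cycle_pred :: "'a \<Rightarrow> 'a" where "cycle_pred y = (f ^^ (period - 1)) y"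

lemma cycle_pred: assumes "y \<in> cycle" shows "cycle_pred y \<in> cycle" "f (cycle_pred y) = y" "cycle_pred (f y) = y"
proof -
  show "cycle_pred y \<in> cycle" unfolding cycle_pred_def using funpow_closed[OF f_cycle assms] .
  have "f (cycle_pred y) = (f ^^ period) y" unfolding cycle_pred_def using period_pos by (metis Suc_diff_1 funpow.simps(2) less_le_trans o_apply zero_less_one)
  then show "f (cycle_pred y) = y" using funpow_period assms by simp
  have "cycle_pred (f y) = (f ^^ period) y" unfolding cycle_pred_def using period_pos by (metis Suc_diff_1 funpow_Suc_right less_le_trans o_apply zero_less_one)
  then show "cycle_pred (f y) = y" using funpow_period assms by simp
qed

lemma cycle_siblings_eq: "x \<in> cycle \<Longrightarrow> y \<in> cycle \<Longrightarrow> f x = f y \<Longrightarrow> x = y"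
  using cycle_pred(3) by metis

lemma cycle_iso: "alg_iso cycle f (cyc_car period) (cyc_fun period)"
proof -
  define \<psi> where "\<psi> i = (f ^^ nat i) c0" for i :: int
  show ?thesis
  proof (rule alg_iso_inv)
    show "bij_betw \<psi> (cyc_car period) cycle"
      unfolding bij_betw_def
    proof
      show "inj_on \<psi> (cyc_car period)"
      proof (rule inj_onI)
        fix i j assume ij: "i \<in> cyc_car period" "j \<in> cyc_car period" "\<psi> i = \<psi> j"
        then have "nat i = nat j" using cycle_funpow_inj[OF c0_in_cycle, of "nat i" "nat j"] by (auto simp: cyc_car_def \<psi>_def)
        then show "i = j" using ij by (auto simp: cyc_car_def)
      qed
      show "\<psi> ` cyc_car period = cycle"
      proof -
        have "\<psi> ` cyc_car period = (\<lambda>i. (f ^^ i) c0) ` {..<period}"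
        proof
          show "\<psi> ` cyc_car period \<subseteq> (\<lambda>i. (f ^^ i) c0) ` {..<period}" by (auto simp: \<psi>_def cyc_car_def)
          show "(\<lambda>i. (f ^^ i) c0) ` {..<period} \<subseteq> \<psi> ` cyc_car period"
          proof
            fix x assume "x \<in> (\<lambda>i. (f ^^ i) c0) ` {..<period}"
            then obtain i where "i < period" "x = (f ^^ i) c0" by blast
            then have "x = \<psi> (int i)" "int i \<in> cyc_car period" by (auto simp: \<psi>_def cyc_car_def)
            then show "x \<in> \<psi> ` cyc_car period" by blast
          qed
        qed
        then show ?thesis using cycle_eq_image[OF c0_in_cycle] by simp
      qed
    qed
    show "\<forall>x\<in>cyc_car period. \<psi> (cyc_fun period x) = f (\<psi> x)"
    proof
      fix i assume i: "i \<in> cyc_car period"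
      show "\<psi> (cyc_fun period i) = f (\<psi> i)"
      proof (cases "i + 1 < int period")
        case True
        then have "cyc_fun period i = i + 1" using i by (simp add: cyc_fun_def cyc_car_def)
        moreover have "nat (i + 1) = Suc (nat i)" using i Suc_nat_eq_nat_zadd1[of i] by (simp add: cyc_car_def add.commute)
        ultimately show ?thesis by (simp add: \<psi>_def)
      next
        case False
        then have "i + 1 = int period" using i by (simp add: cyc_car_def)
        then have "cyc_fun period i = 0" by (simp add: cyc_fun_def)
        moreover have "f (\<psi> i) = (f ^^ period) c0"
        proof -
          have "period = Suc (nat i)" using \<open>i + 1 = int period\<close> i by (simp add: cyc_car_def)
          then show ?thesis by (simp add: \<psi>_def)
        qed
        ultimately show ?thesis using funpow_period_c0 by (simp add: \<psi>_def)
      qed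
    qed
    show "cyc_fun period ` cyc_car period \<subseteq> cyc_car period"
      using period_pos by (auto simp: cyc_fun_def cyc_car_def)
  qed
qed

lemma inf_core_cycle: "inf_core A f cycle"
proof (rule inf_coreI)
  show "cycle \<subseteq> A" by (rule cycle_subset)
  show "cycle \<noteq> {}" using c0_in_cycle by blast
  show "f ` cycle \<subseteq> cycle" by (rule f_cycle)
  show "\<forall>y\<in>cycle. cycle_pred y \<in> cycle \<and> f (cycle_pred y) = y" using cycle_pred by blast
  show "\<forall>q\<in>cycle. \<exists>a b. \<forall>x\<in>cycle. f x = q \<longrightarrow> x = a \<or> x = b" using cycle_pred by metis
  show "S0 cycle f"
    unfolding S0_def mono_alg_def using cycle_iso f_cycle c0_in_cycle period_pos by blast
qed

definition depth :: "'a \<Rightarrow> nat" where "depth x = (LEAST d. (f ^^ d) x \<in> cycle)"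

lemma funpow_depth_in_cycle: assumes "x \<in> A" shows "(f ^^ depth x) x \<in> cycle"
proof -
  obtain t where "(f ^^ t) x \<in> cycle" using reaches_subalgebra[OF _ f_cycle assms cycle_subset] c0_in_cycle by blast
  then show ?thesis unfolding depth_def by (meson LeastI)
qed

lemma depth_le: "(f ^^ d) x \<in> cycle \<Longrightarrow> depth x \<le> d" unfolding depth_def by (meson Least_le)

lemma depth_Suc: "x \<in> A \<Longrightarrow> x \<notin> cycle \<Longrightarrow> depth x = Suc (depth (f x))"
proof -
  assume x: "x \<in> A" "x \<notin> cycle"
  obtain t where t: "(f ^^ t) x \<in> cycle" using funpow_depth_in_cycle x by blast
  have z0: "\<not> (f ^^ 0) x \<in> cycle" using x by simp
  have "depth (f x) = (LEAST k. (f ^^ Suc k) x \<in> cycle)" unfolding depth_def by (simp add: funpow_swap1)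
  also have "\<dots> = (LEAST k. (f ^^ k) x \<in> cycle) - 1" by (rule Least_Suc_eq_Least_minus_1[of "\<lambda>k. (f ^^ k) x \<in> cycle" t, OF t z0])
  finally have "depth (f x) = depth x - 1" unfolding depth_def .
  moreover have "depth x \<noteq> 0" using funpow_depth_in_cycle[OF x(1)] x(2) by (metis funpow_0)
  ultimately show ?thesis by simp
qed

definition ray :: "'a \<Rightarrow> nat \<Rightarrow> 'a" where
  "ray w j = (if j \<le> depth w then (f ^^ (depth w - j)) w else back_chain w (j - depth w))"

context
  fixes w assumes w: "w \<in> K" "w \<notin> cycle"
begin

lemma w_in_A: "w \<in> A" using w K_subset by blast

lemma f_ray: "f (ray w (Suc j)) = ray w j"
proof (cases "Suc j \<le> depth w")
  case True
  then have "depth w - j = Suc (depth w - Suc j)" by simp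
  then show ?thesis using True by (simp add: ray_def)
next
  case False
  show ?thesis
  proof (cases "j = depth w")
    case True then show ?thesis using back_chain(1,3)[OF w(1)] by (simp add: ray_def)
  next
    case False2: False
    then have "Suc j - depth w = Suc (j - depth w)" "\<not> j \<le> depth w" using False by auto
    then show ?thesis using False back_chain(3)[OF w(1)] by (simp add: ray_def)
  qed
qed

lemma ray_in: "ray w j \<in> A"
  unfolding ray_def using funpow_in[OF w_in_A] back_chain(2)[OF w(1)] by auto

lemma ray_depth: "ray w (depth w) = w" by (simp add: ray_def)

lemma ray_0_in_cycle: "ray w 0 \<in> cycle" unfolding ray_def using funpow_depth_in_cycle[OF w_in_A] by simp

lemma funpow_ray: "(f ^^ m) (ray w (m + j)) = ray w j"
proof (induction m)
  case (Suc m)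
  have "(f ^^ Suc m) (ray w (Suc m + j)) = (f ^^ m) (f (ray w (Suc (m + j))))"
    by (simp add: funpow_swap1)
  then show ?case using Suc f_ray by simp
qed simp

lemma ray_not_in_cycle: assumes "j \<ge> 1" shows "ray w j \<notin> cycle"
proof
  assume a: "ray w j \<in> cycle"
  show False
  proof (cases "j \<le> depth w")
    case True
    then have "(f ^^ (depth w - j)) w \<in> cycle" using a by (simp add: ray_def)
    then have "depth w \<le> depth w - j" using depth_le by blast
    then show False using assms True depth_Suc[OF w_in_A w(2)] by simp
  next
    case False
    have "(f ^^ (j - depth w)) (ray w (j - depth w + depth w)) = ray w (depth w)" using funpow_ray .
    then have "(f ^^ (j - depth w)) (ray w j) = w" using False ray_depth by simp
    then have "w \<in> cycle" using funpow_closed[OF f_cycle a] by metis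
    then show False using w by simp
  qed
qed

lemma inj_ray: "inj (ray w)"
proof (rule injI)
  fix i j assume e: "ray w i = ray w j"
  show "i = j"
  proof (rule ccontr)
    assume ne: "i \<noteq> j"
    have gen: False if "a < b" "ray w a = ray w b" for a b
    proof -
      have "(f ^^ (b - a)) (ray w (b - a + a)) = ray w a" using funpow_ray .
      then have "(f ^^ Suc (b - a - 1)) (ray w b) = ray w b" using that by (simp add: Suc_diff_Suc)
      then have "ray w b \<in> cycle" using ray_in unfolding cycle_def by blast
      then show False using ray_not_in_cycle[of b] that by simp
    qed
    show False using ne gen[of i j] gen[of j i] e by (metis linorder_neqE_nat)
  qed
qed

lemma depth_ray: "depth (ray w j) = j"
proof (rule antisym)
  show "depth (ray w j) \<le> j" using depth_le funpow_ray[of j 0] ray_0_in_cycle by simp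
  show "j \<le> depth (ray w j)"
  proof (rule ccontr)
    assume "\<not> j \<le> depth (ray w j)"
    then have lt: "depth (ray w j) < j" by simp
    have "(f ^^ depth (ray w j)) (ray w (depth (ray w j) + (j - depth (ray w j)))) = ray w (j - depth (ray w j))"
      using funpow_ray .
    then have "(f ^^ depth (ray w j)) (ray w j) = ray w (j - depth (ray w j))" using lt by simp
    moreover have "(f ^^ depth (ray w j)) (ray w j) \<in> cycle" using funpow_depth_in_cycle ray_in by blast
    ultimately show False using ray_not_in_cycle[of "j - depth (ray w j)"] lt by simp
  qed
qed

definition hat_core :: "'a set" where "hat_core = cycle \<union> range (ray w)"

lemma f_hat_core: "f ` hat_core \<subseteq> hat_core"
proof
  fix y assume "y \<in> f ` hat_core"
  then obtain x where x: "x \<in> hat_core" "y = f x" by blast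
  then consider "x \<in> cycle" | j where "x = ray w j" unfolding hat_core_def by blast
  then show "y \<in> hat_core"
  proof cases
    case 1 then show ?thesis using f_cycle x unfolding hat_core_def by blast
  next
    case (2 j)
    show ?thesis
    proof (cases j)
      case 0 then show ?thesis using 2 x ray_0_in_cycle f_cycle unfolding hat_core_def by blast
    next
      case (Suc i) then show ?thesis using 2 x f_ray unfolding hat_core_def by auto
    qed
  qed
qed

lemma hat_core_preimages: "\<forall>q\<in>hat_core. \<exists>a b. \<forall>x\<in>hat_core. f x = q \<longrightarrow> x = a \<or> x = b"
proof
  fix q assume q: "q \<in> hat_core"
  show "\<exists>a b. \<forall>x\<in>hat_core. f x = q \<longrightarrow> x = a \<or> x = b"
  proof (cases "q \<in> cycle")
    case True
    have "\<forall>x\<in>hat_core. f x = q \<longrightarrow> x = cycle_pred q \<or> x = ray w 1"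
    proof (intro ballI impI)
      fix x assume x: "x \<in> hat_core" "f x = q"
      show "x = cycle_pred q \<or> x = ray w 1"
      proof (cases "x \<in> cycle")
        case True then show ?thesis using cycle_pred(3)[OF True] x by simp
      next
        case False
        then obtain j where j: "x = ray w j" using x unfolding hat_core_def by blast
        have "j \<noteq> 0" using False ray_0_in_cycle j by (metis)
        then obtain i where i: "j = Suc i" by (cases j) auto
        then have "ray w i \<in> cycle" using x j f_ray True by simp
        then have "i = 0" using ray_not_in_cycle[of i] by (cases i) auto
        then show ?thesis using i j by simp
      qed
    qed
    then show ?thesis by blast
  next
    case False
    then obtain i where i: "q = ray w i" using q unfolding hat_core_def by blast
    have "\<forall>x\<in>hat_core. f x = q \<longrightarrow> x = ray w (Suc i)"
    proof (intro ballI impI)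
      fix x assume x: "x \<in> hat_core" "f x = q"
      show "x = ray w (Suc i)"
      proof (cases "x \<in> cycle")
        case True then show ?thesis using f_cycle x False by blast
      next
        case xC: False
        then obtain j where j: "x = ray w j" using x unfolding hat_core_def by blast
        have "j \<noteq> 0" using xC ray_0_in_cycle j by (metis)
        then obtain k where k: "j = Suc k" by (cases j) auto
        then have "ray w k = ray w i" using x j f_ray i by simp
        then have "k = i" using inj_ray by (simp add: inj_eq)
        then show ?thesis using k j by simp
      qed
    qed
    then show ?thesis by blast
  qed
qed

lemma hat_core_iso: "alg_iso hat_core f (hat_car period) (hat_fun period)"
proof -
  have inj: "inj (ray w)" using inj_ray .
  define c where "c = ray w 0"
  have cC: "c \<in> cycle" using ray_0_in_cycle c_def by simp
  define \<psi> where "\<psi> x = (case x of Inl i \<Rightarrow> (f ^^ nat i) c | Inr k \<Rightarrow> ray w k)" for x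
  show ?thesis
  proof (rule alg_iso_inv)
    show "bij_betw \<psi> (hat_car period) hat_core"
      unfolding bij_betw_def
    proof
      show "inj_on \<psi> (hat_car period)"
      proof (rule inj_onI)
        fix x y assume xy: "x \<in> hat_car period" "y \<in> hat_car period" "\<psi> x = \<psi> y"
        have inC: "(f ^^ n) c \<in> cycle" for n using funpow_closed[OF f_cycle cC] .
        show "x = y"
        proof (cases x)
          case (Inl a)
          show ?thesis
          proof (cases y)
            case (Inl b)
            then have "nat a = nat b" using cycle_funpow_inj[OF cC, of "nat a" "nat b"] xy \<open>x = Inl a\<close>
              by (auto simp: hat_car_def \<psi>_def)
            then show ?thesis using xy \<open>x = Inl a\<close> Inl by (auto simp: hat_car_def)
          next
            case (Inr b)
            then have "b \<ge> 1" using xy by (auto simp: hat_car_def)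
            then have "ray w b \<notin> cycle" using ray_not_in_cycle by blast
            moreover have "(f ^^ nat a) c = ray w b" using xy \<open>x = Inl a\<close> Inr by (simp add: \<psi>_def)
            ultimately show ?thesis using inC[of "nat a"] by simp
          qed
        next
          case (Inr a)
          then have a1: "a \<ge> 1" using xy by (auto simp: hat_car_def)
          show ?thesis
          proof (cases y)
            case (Inl b)
            have "ray w a \<notin> cycle" using ray_not_in_cycle[OF a1] .
            moreover have "(f ^^ nat b) c = ray w a" using xy \<open>x = Inr a\<close> Inl by (simp add: \<psi>_def)
            ultimately show ?thesis using inC[of "nat b"] by simp
          next
            case (Inr b) then show ?thesis using xy \<open>x = Inr a\<close> inj by (simp add: \<psi>_def inj_eq)
          qed
        qed
      qed
      show "\<psi> ` hat_car period = hat_core"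
      proof
        show "\<psi> ` hat_car period \<subseteq> hat_core"
          using funpow_closed[OF f_cycle cC] unfolding hat_core_def hat_car_def \<psi>_def by auto
        show "hat_core \<subseteq> \<psi> ` hat_car period"
        proof
          fix y assume "y \<in> hat_core"
          then consider "y \<in> cycle" | k where "y = ray w k" "k \<ge> 1" unfolding hat_core_def
            using ray_0_in_cycle by (metis UnE imageE less_one not_le)
          then show "y \<in> \<psi> ` hat_car period"
          proof cases
            case 1
            then obtain i where i: "i < period" "y = (f ^^ i) c" using cycle_eq_image[OF cC] by blast
            then have "y = \<psi> (Inl (int i))" "Inl (int i) \<in> hat_car period" by (auto simp: \<psi>_def hat_car_def)
            then show ?thesis by blast
          next
            case (2 k)
            then have "y = \<psi> (Inr k)" "Inr k \<in> hat_car period" by (auto simp: \<psi>_def hat_car_def)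
            then show ?thesis by blast
          qed
        qed
      qed
    qed
    show "\<forall>x\<in>hat_car period. \<psi> (hat_fun period x) = f (\<psi> x)"
    proof
      fix x assume x: "x \<in> hat_car period"
      show "\<psi> (hat_fun period x) = f (\<psi> x)"
      proof (cases x)
        case (Inl i)
        then have i: "0 \<le> i" "i < int period" using x by (auto simp: hat_car_def)
        show ?thesis
        proof (cases "i + 1 < int period")
          case True
          then have "(i + 1) mod int period = i + 1" using i by simp
          moreover have "nat (i + 1) = Suc (nat i)" using i Suc_nat_eq_nat_zadd1[of i] by (simp add: add.commute)
          ultimately show ?thesis using Inl by (simp add: \<psi>_def hat_fun_def)
        next
          case False
          then have e: "i + 1 = int period" using i by simp
          then have "(i + 1) mod int period = 0" by simp
          moreover have "period = Suc (nat i)" using e i by simp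
          moreover have "(f ^^ period) c = c" using funpow_period cC by simp
          ultimately show ?thesis using Inl by (simp add: \<psi>_def hat_fun_def)
        qed
      next
        case (Inr k)
        then have k: "k \<ge> 1" using x by (auto simp: hat_car_def)
        show ?thesis
        proof (cases "k > 1")
          case True
          then have "k = Suc (k - 1)" by simp
          then have "f (ray w k) = ray w (k - 1)" using f_ray by metis
          then show ?thesis using Inr True by (simp add: \<psi>_def hat_fun_def)
        next
          case False
          then have "k = 1" using k by simp
          then show ?thesis using Inr f_ray[of 0] by (simp add: \<psi>_def hat_fun_def c_def)
        qed
      qed
    qed
    show "hat_fun period ` hat_car period \<subseteq> hat_car period"
      using period_pos unfolding hat_fun_def hat_car_def by (auto split: sum.splits)
  qed
qed

lemma inf_core_hat_core: "inf_core A f hat_core"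
proof -
  have iv: "inv (ray w) (ray w k) = k" for k using inj_ray by simp
  define \<beta> where "\<beta> y = (if y \<in> range (ray w) then ray w (Suc (inv (ray w) y)) else cycle_pred y)" for y
  show ?thesis
  proof (rule inf_coreI)
    show "hat_core \<subseteq> A" using cycle_subset ray_in unfolding hat_core_def by blast
    show "hat_core \<noteq> {}" unfolding hat_core_def by blast
    show "\<forall>y\<in>hat_core. \<beta> y \<in> hat_core \<and> f (\<beta> y) = y"
    proof
      fix y assume "y \<in> hat_core"
      then consider k where "y = ray w k" | "y \<in> cycle" "y \<notin> range (ray w)" unfolding hat_core_def by blast
      then show "\<beta> y \<in> hat_core \<and> f (\<beta> y) = y"
      proof cases
        case 1 then show ?thesis using iv f_ray unfolding \<beta>_def hat_core_def by auto
      next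
        case 2 then show ?thesis using cycle_pred unfolding \<beta>_def hat_core_def by auto
      qed
    qed
    show "S0 hat_core f"
      unfolding S0_def mono_alg_def using hat_core_iso f_hat_core period_pos unfolding hat_core_def by blast
  qed (use f_hat_core hat_core_preimages in auto)
qed

lemma in_hat_core: "w \<in> hat_core" unfolding hat_core_def using ray_depth by (metis UnI2 rangeI)

lemma cycle_subset_hat_core: "cycle \<subseteq> hat_core" unfolding hat_core_def by blast

end


definition ray_point :: "'a set \<Rightarrow> nat \<Rightarrow> 'a" where
  "ray_point M i = (THE y. y \<in> M \<and> y \<notin> cycle \<and> depth y = i)"

lemma ray_point_hat_core: assumes w: "w \<in> K" "w \<notin> cycle" shows "ray_point (hat_core w) (depth w) = w"
  unfolding ray_point_def
proof (rule the_equality)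
  show "w \<in> hat_core w \<and> w \<notin> cycle \<and> depth w = depth w" using in_hat_core[OF w] w by simp
  fix y assume y: "y \<in> hat_core w \<and> y \<notin> cycle \<and> depth y = depth w"
  then obtain j where j: "y = ray w j" unfolding hat_core_def[OF w] by blast
  then have "j = depth w" using depth_ray[OF w] y by simp
  then show "y = w" using j ray_depth[OF w] by simp
qed

definition shift_map :: "'a set \<Rightarrow> nat \<Rightarrow> 'a \<Rightarrow> 'a" where
  "shift_map M k x = (if x \<in> Pset A f (ray_point M (Suc k)) then canonical_retraction A f M ((f ^^ k) x) else canonical_retraction A f cycle ((f ^^ k) x))"

lemma f_not_in_Pset_self: assumes "u \<in> K" "u \<notin> cycle" shows "f u \<notin> Pset A f u"
proof
  assume "f u \<in> Pset A f u"
  then obtain m where "(f ^^ m) (f u) = u" unfolding Pset_def by blast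
  then have "(f ^^ Suc m) u = u" by (simp add: funpow_swap1)
  then show False using assms K_subset unfolding cycle_def by blast
qed

lemma shift_map_hom:
  assumes u: "u \<in> K" "u \<notin> cycle"
  shows "\<forall>x\<in>A. shift_map (hat_core u) (depth (f u)) x \<in> hat_core u \<and> shift_map (hat_core u) (depth (f u)) (f x) = f (shift_map (hat_core u) (depth (f u)) x)"
proof
  fix x assume x: "x \<in> A"
  define k where "k = depth (f u)"
  have uA: "u \<in> A" using u K_subset by blast
  have Du: "depth u = Suc k" using depth_Suc[OF uA u(2)] k_def by simp
  have re: "ray_point (hat_core u) (Suc k) = u" using ray_point_hat_core[OF u] Du by simp
  have R: "retraction A f (hat_core u) (canonical_retraction A f (hat_core u))"
    using canonical_retraction inf_coreD(2)[OF inf_core_hat_core[OF u]] by blast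
  have \<kappa>: "retraction A f cycle (canonical_retraction A f cycle)"
    using canonical_retraction inf_coreD(2)[OF inf_core_cycle] by blast
  have g: "shift_map (hat_core u) k y = (if y \<in> Pset A f u then canonical_retraction A f (hat_core u) ((f ^^ k) y) else canonical_retraction A f cycle ((f ^^ k) y))" for y
    unfolding shift_map_def re by simp
  have fkx: "(f ^^ k) x \<in> A" using funpow_in x by blast
  have "shift_map (hat_core u) k x \<in> hat_core u"
    using g R \<kappa> fkx cycle_subset_hat_core[OF u] unfolding retraction_def by auto
  moreover have "shift_map (hat_core u) k (f x) = f (shift_map (hat_core u) k x)"
  proof (cases "x \<in> Pset A f u")
    case True
    show ?thesis
    proof (cases "x = u")
      case True
      have fuP: "f u \<notin> Pset A f u" using f_not_in_Pset_self[OF u] .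
      have inC: "(f ^^ k) (f u) \<in> cycle" using funpow_depth_in_cycle[OF f_in[OF uA]] k_def by simp
      have "shift_map (hat_core u) k (f x) = canonical_retraction A f cycle ((f ^^ k) (f u))" using g fuP True by simp
      also have "\<dots> = (f ^^ k) (f u)" using \<kappa> inC unfolding retraction_def by blast
      finally have l: "shift_map (hat_core u) k (f x) = (f ^^ k) (f u)" .
      have "f (shift_map (hat_core u) k x) = f (canonical_retraction A f (hat_core u) ((f ^^ k) u))" using g True Pset_root[OF uA] by simp
      also have "\<dots> = canonical_retraction A f (hat_core u) (f ((f ^^ k) u))" using R funpow_in[OF uA] unfolding retraction_def by metis
      also have "\<dots> = canonical_retraction A f (hat_core u) ((f ^^ k) (f u))" by (simp add: funpow_swap1)
      also have "\<dots> = (f ^^ k) (f u)" using R inC cycle_subset_hat_core[OF u] unfolding retraction_def by blast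
      finally show ?thesis using l by simp
    next
      case False
      then have "f x \<in> Pset A f u" using Pset_step[OF closed] \<open>x \<in> Pset A f u\<close> by blast
      then have "shift_map (hat_core u) k (f x) = canonical_retraction A f (hat_core u) ((f ^^ k) (f x))" using g by simp
      also have "\<dots> = canonical_retraction A f (hat_core u) (f ((f ^^ k) x))" by (simp add: funpow_swap1)
      also have "\<dots> = f (canonical_retraction A f (hat_core u) ((f ^^ k) x))" using R fkx unfolding retraction_def by blast
      finally show ?thesis using g \<open>x \<in> Pset A f u\<close> by simp
    qed
  next
    case False
    then have "f x \<notin> Pset A f u" using Pset_back x by metis
    then have "shift_map (hat_core u) k (f x) = canonical_retraction A f cycle ((f ^^ k) (f x))" using g by simp
    also have "\<dots> = canonical_retraction A f cycle (f ((f ^^ k) x))" by (simp add: funpow_swap1)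
    also have "\<dots> = f (canonical_retraction A f cycle ((f ^^ k) x))" using \<kappa> fkx unfolding retraction_def by blast
    finally show ?thesis using g False by simp
  qed
  ultimately show "shift_map (hat_core u) (depth (f u)) x \<in> hat_core u \<and> shift_map (hat_core u) (depth (f u)) (f x) = f (shift_map (hat_core u) (depth (f u)) x)"
    using k_def by simp
qed

lemma shift_map_separates:
  assumes u: "u \<in> K" "u \<notin> cycle" and v: "v \<in> K" "v \<notin> cycle" and uv: "f u = f v" "u \<noteq> v"
  shows "shift_map (hat_core u) (depth (f u)) u \<noteq> shift_map (hat_core u) (depth (f u)) v"
proof -
  define k where "k = depth (f u)"
  have uA: "u \<in> A" using u K_subset by blast
  have vA: "v \<in> A" using v K_subset by blast
  have Du: "depth u = Suc k" using depth_Suc[OF uA u(2)] k_def by simp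
  have re: "ray_point (hat_core u) (Suc k) = u" using ray_point_hat_core[OF u] Du by simp
  have R: "retraction A f (hat_core u) (canonical_retraction A f (hat_core u))"
    using canonical_retraction inf_coreD(2)[OF inf_core_hat_core[OF u]] by blast
  have \<kappa>: "retraction A f cycle (canonical_retraction A f cycle)"
    using canonical_retraction inf_coreD(2)[OF inf_core_cycle] by blast
  have g: "shift_map (hat_core u) k y = (if y \<in> Pset A f u then canonical_retraction A f (hat_core u) ((f ^^ k) y) else canonical_retraction A f cycle ((f ^^ k) y))" for y
    unfolding shift_map_def re by simp
  have vP: "v \<notin> Pset A f u"
  proof
    assume "v \<in> Pset A f u"
    then obtain m where m: "(f ^^ m) v = u" unfolding Pset_def by blast
    show False
    proof (cases m)
      case 0 then show False using m uv by simp
    next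
      case (Suc m')
      then have "(f ^^ m') (f u) = u" using m uv by (simp add: funpow_swap1)
      then have "(f ^^ Suc m') u = u" by (simp add: funpow_swap1)
      then show False using u uA unfolding cycle_def by blast
    qed
  qed
  have fku: "(f ^^ k) u = ray u 1"
  proof -
    have "(f ^^ k) (ray u (k + 1)) = ray u 1" using funpow_ray[OF u] .
    then show ?thesis using ray_depth[OF u] Du by simp
  qed
  have "shift_map (hat_core u) k u = canonical_retraction A f (hat_core u) (ray u 1)" using g fku Pset_root[OF uA] by simp
  also have "\<dots> = ray u 1" using R unfolding retraction_def hat_core_def[OF u] by blast
  finally have gu: "shift_map (hat_core u) k u \<notin> cycle" using ray_not_in_cycle[OF u, of 1] by simp
  have "shift_map (hat_core u) k v \<in> cycle" using g vP \<kappa> funpow_in[OF vA] unfolding retraction_def by auto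
  then show ?thesis using gu k_def by metis
qed

lemma has_S_retract_basis_cyclic: "has_S_retract_basis A f"
proof -
  define KC where "KC = insert cycle {hat_core w | w. w \<in> K \<and> w \<notin> cycle}"
  define J' where "J' = {(hat_core u, depth (f u)) | u. u \<in> K \<and> u \<notin> cycle}"
  define g' where "g' j = shift_map (fst j) (snd j)" for j :: "'a set \<times> nat"
  have Kne: "K \<noteq> {}" using c0_in_cycle cycle_subset_K by blast
  have cores: "\<forall>K0\<in>KC. inf_core A f K0"
    unfolding KC_def using inf_core_cycle inf_core_hat_core by blast
  have cover: "\<forall>w\<in>K. \<exists>K0\<in>KC. w \<in> K0"
    unfolding KC_def using in_hat_core by blast
  have J'_ret: "\<forall>j\<in>J'. retract A f (fst j) \<and> S_class (fst j) f"
    unfolding J'_def S_class_def using inf_core_hat_core inf_coreD(2,3) by fastforce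
  have g'_hom: "\<forall>j\<in>J'. \<forall>x\<in>A. g' j x \<in> fst j \<and> g' j (f x) = f (g' j x)"
    unfolding J'_def g'_def using shift_map_hom by fastforce
  have "(\<exists>K0\<in>KC. u \<in> K0 \<and> v \<in> K0) \<or> (\<exists>j\<in>J'. g' j u \<noteq> g' j v)"
    if uv: "u \<in> K" "v \<in> K" "f u = f v" "u \<noteq> v" for u v
  proof (cases "u \<in> cycle \<or> v \<in> cycle")
    case True
    then have "u \<notin> cycle \<or> v \<notin> cycle" using cycle_siblings_eq uv by blast
    then have "\<exists>w. w \<in> K \<and> w \<notin> cycle \<and> u \<in> hat_core w \<and> v \<in> hat_core w"
      using True uv(1,2) in_hat_core cycle_subset_hat_core by blast
    then show ?thesis unfolding KC_def by blast
  next
    case False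
    then have "(hat_core u, depth (f u)) \<in> J'" "g' (hat_core u, depth (f u)) u \<noteq> g' (hat_core u, depth (f u)) v"
      using uv shift_map_separates unfolding J'_def g'_def by auto
    then show ?thesis by blast
  qed
  then show ?thesis using has_S_retract_basis_from_cores[OF Kne cores cover J'_ret g'_hom] by blast
qed

end

theorem lemma4p7:
  fixes A :: "'a set" and f :: "'a \<Rightarrow> 'a"
  assumes "mono_alg A f" and "connected_alg A f"
  shows "\<exists>\<B> :: 'a set set. (\<forall>M\<in>\<B>. retract A f M \<and> S_class M f) \<and>
           in_V \<B> f A f \<and> (\<forall>M\<in>\<B>. in_V {A} f M f)"
proof -
  interpret connected_unary A f
    using assms unfolding mono_alg_def connected_alg_def by unfold_locales auto
  have "has_S_retract_basis A f"
  proof (cases "K = {}")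
    case True
    then show ?thesis by (rule has_S_retract_basis_if_no_Ainf)
  next
    case Kne: False
    show ?thesis
    proof (cases "\<exists>c\<in>A. \<exists>p. (f ^^ Suc p) c = c")
      case True
      then obtain c p where "c \<in> A" "(f ^^ Suc p) c = c" by blast
      then interpret cyclic_connected_unary A f c p by unfold_locales
      show ?thesis by (rule has_S_retract_basis_cyclic)
    next
      case False
      then interpret acyclic_connected_unary A f by unfold_locales blast
      show ?thesis using has_S_retract_basis_acyclic[OF Kne] .
    qed
  qed
  then show ?thesis unfolding has_S_retract_basis_def .
qed

end
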